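(* Let $n\ge3$, $p=\frac{n+2}{n-2}$, $q=\frac n{n-2}$, $c_+>0$. Let $u\in C^2(H)\cap C^1(\overline H)$ satisfy $\Delta u=n(n-2)u^p$, $u>0$ in $H$, and $\frac{\partial u}{\partial t}=-c_+u^q$ on $\partial H$. Let $v(x)=|x|^{2-n}u(x/|x|^2)$ and, for $\lambda>0$, $w_\lambda(x)=v(x)-\frac{\lambda^{n-2}}{|x|^{n-2}}v\big(\frac{\lambda^2x}{|x|^2}\big)$. Then there exists $\Lambda>0$ such that for all $\lambda\ge\Lambda$, $w_\lambda(x)\ge0$ for all $x\in B_\lambda^+\setminus\{0\}$.
   Context: $H=\{(x',t): x'\in\mathbb{R}^{n-1}, t>0\}$, $\partial H=\{t=0\}$; $B_\lambda^+=\{x\in H:|x|<\lambda\}$. $\partial u/\partial t$ on $\partial H$ is the derivative in $t$ at $t=0$. *)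

theory Defs
  imports "HOL-Analysis.Analysis"
begin

text \<open>Upper half space with respect to a distinguished unit coordinate vector e (the t-direction).\<close>
definition halfspace :: "'a::euclidean_space \<Rightarrow> 'a set" where
  "halfspace e = {x. x \<bullet> e > 0}"

definition pd :: "('a::euclidean_space \<Rightarrow> real) \<Rightarrow> 'a \<Rightarrow> 'a \<Rightarrow> real" where
  "pd u i x = deriv (\<lambda>s. u (x + s *\<^sub>R i)) 0"

definition C2_on :: "'a::euclidean_space set \<Rightarrow> ('a \<Rightarrow> real) \<Rightarrow> bool" where
  "C2_on S u \<longleftrightarrow> continuous_on S u \<and>
     (\<forall>i\<in>Basis. (\<forall>x\<in>S. (\<lambda>s. u (x + s *\<^sub>R i)) differentiable (at 0)) \<and> continuous_on S (pd u i) \<and>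
        (\<forall>j\<in>Basis. (\<forall>x\<in>S. (\<lambda>s. pd u i (x + s *\<^sub>R j)) differentiable (at 0))
                   \<and> continuous_on S (pd (pd u i) j)))"

definition C1_upto :: "'a::euclidean_space set \<Rightarrow> ('a \<Rightarrow> real) \<Rightarrow> bool" where
  "C1_upto S u \<longleftrightarrow> continuous_on (closure S) u \<and>
     (\<forall>i\<in>Basis. \<exists>g. continuous_on (closure S) g \<and>
        (\<forall>x\<in>S. ((\<lambda>s. u (x + s *\<^sub>R i)) has_real_derivative g x) (at 0)))"

definition laplacian :: "('a::euclidean_space \<Rightarrow> real) \<Rightarrow> 'a \<Rightarrow> real" where
  "laplacian u x = (\<Sum>i\<in>Basis. pd (pd u i) i x)"

end

(*
  Write a = (n - 2)/2, r = 1/|x|, s = |x|/l^2 and omega = x/|x|. Then r s = 1/l^2 and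
    w_l(x) = r^a (r^a u(r omega) - s^a u(s omega)),
  so it suffices that s^a u(s omega) <= r^a u(r omega) for all unit vectors omega in the
  half-space and all 0 < s < r with r s small.

  Two comparison arguments for the equation provide the bounds. A Hopf barrier at the origin
  gives u >= eps t along the normal, so u(0) = 0 would contradict the boundary condition,
  whose normal derivative -c u(0)^q then vanishes; hence u(0) > 0. On the exterior of a
  half-ball, delta (|y|^(2-n) + |y|^(1-n)) + m |y + e|^(-1/2) with m < 0 is a strict
  subsolution whose normal derivative on the flat boundary has the wrong sign for contact,
  which yields u(y) >= delta |y|^(2-n).

  If r is small, then u >= u(0)/2 and u is Lipschitz on [s omega, r omega] (u is C^1 up to
  the boundary), so t^a u(t omega) increases on [s, r]. If r is large, the decay bound and
  the boundedness of u near the origin give the inequality once r s is small.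
*)

theory Submission
  imports Defs
begin

lemma DERIV2_local_min_nonneg:
  fixes f f' :: "real \<Rightarrow> real"
  assumes "0 < d"
    and f': "\<And>s. \<bar>s\<bar> < d \<Longrightarrow> (f has_real_derivative f' s) (at s)"
    and f'': "(f' has_real_derivative D) (at 0)"
    and min: "\<And>s. \<bar>s\<bar> < d \<Longrightarrow> f 0 \<le> f s"
  shows "0 \<le> D"
proof (rule ccontr)
  assume "\<not> 0 \<le> D"
  have "f' 0 = 0"
    using DERIV_local_min[OF f'[of 0] \<open>0 < d\<close>] min \<open>0 < d\<close> by (auto simp: abs_minus_commute)
  with f'' have "((\<lambda>s. f' s / s) \<longlongrightarrow> D) (at 0)"
    by (simp add: has_field_derivative_iff)
  hence "\<forall>\<^sub>F s in at 0. f' s / s < 0"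
    using \<open>\<not> 0 \<le> D\<close> by (simp add: order_tendstoD(2))
  then obtain \<epsilon> where \<epsilon>: "0 < \<epsilon>" "\<And>s. s \<noteq> 0 \<Longrightarrow> \<bar>s\<bar> < \<epsilon> \<Longrightarrow> f' s / s < 0"
    unfolding eventually_at by (auto simp: dist_real_def)
  define s where "s = min \<epsilon> d / 2"
  have s: "0 < s" "s < \<epsilon>" "s < d"
    using \<epsilon> \<open>0 < d\<close> by (auto simp: s_def)
  obtain z where z: "0 < z" "z < s" "f s - f 0 = (s - 0) * f' z"
    using MVT2[of 0 s f f'] s f' by force
  have "f' z < 0"
    using \<epsilon>(2)[of z] z s by (simp add: divide_less_0_iff)
  hence "f s < f 0"
    using z s mult_pos_neg[of s "f' z"] by simp
  thus False
    using min[of s] s by simp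
qed

lemma DERIV_right_local_min_nonneg:
  fixes f :: "real \<Rightarrow> real"
  assumes "(f has_real_derivative D) (at_right 0)" "0 < d"
    and "\<And>s. 0 < s \<Longrightarrow> s < d \<Longrightarrow> f 0 \<le> f s"
  shows "0 \<le> D"
proof (rule tendsto_lowerbound)
  show "((\<lambda>s. (f s - f 0) / s) \<longlongrightarrow> D) (at_right 0)"
    using assms(1) by (simp add: has_field_derivative_iff)
  show "\<forall>\<^sub>F s in at_right 0. 0 \<le> (f s - f 0) / s"
    using eventually_at_right_real[OF \<open>0 < d\<close>] by eventually_elim (simp add: assms(3))
qed simp

lemma exists_small_powr_le:
  fixes a Y Z :: real
  assumes "0 < a" "0 < Y" "0 < Z"
  shows "\<exists>\<epsilon>>0. \<epsilon> \<le> Z \<and> \<epsilon> powr a \<le> Y"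
proof (intro exI conjI)
  show "0 < min Z (Y powr (1 / a))" "min Z (Y powr (1 / a)) \<le> Z"
    using assms by auto
  have "min Z (Y powr (1 / a)) powr a \<le> (Y powr (1 / a)) powr a"
    using assms by (intro powr_mono2) auto
  thus "min Z (Y powr (1 / a)) powr a \<le> Y"
    using assms by (simp add: powr_powr)
qed

lemma powr_mult_le_of_small:
  fixes \<epsilon> B p L :: real
  assumes "0 < \<epsilon>" "0 \<le> B" "\<epsilon> powr (p - 1) * B powr p \<le> L"
  shows "(\<epsilon> * B) powr p \<le> \<epsilon> * L"
proof -
  have "(\<epsilon> * B) powr p = \<epsilon> * (\<epsilon> powr (p - 1) * B powr p)"
    using assms(1,2) by (simp add: powr_mult powr_diff)
  thus ?thesis
    using assms(1,3) by simp
qed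

lemma powr_weighted_le_of_lipschitz:
  fixes r s \<alpha> K a b :: real
  assumes "0 < s" "s < r" "0 < \<alpha>" "0 \<le> K"
    and "r * K \<le> \<alpha> * b" and "a \<le> b + K * (r - s)"
  shows "s powr \<alpha> * a \<le> r powr \<alpha> * b"
proof -
  have "\<exists>z. s < z \<and> z < r \<and> r powr \<alpha> - s powr \<alpha> = (r - s) * (\<alpha> * z powr (\<alpha> - 1))"
    by (rule MVT2) (use assms(1,2) in \<open>auto intro!: has_real_derivative_powr\<close>)
  then obtain z where z: "s < z" "z < r" "r powr \<alpha> - s powr \<alpha> = (r - s) * (\<alpha> * z powr (\<alpha> - 1))"
    by blast
  have "0 < z"
    using z assms(1) by simp
  have "s powr \<alpha> * K \<le> z powr \<alpha> * K"
    using z assms(1,3,4) by (intro mult_right_mono powr_mono2) auto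
  also have "\<dots> = z powr (\<alpha> - 1) * (z * K)"
    using \<open>0 < z\<close> by (simp add: powr_diff)
  also have "\<dots> \<le> z powr (\<alpha> - 1) * (\<alpha> * b)"
    using z assms(4,5) mult_right_mono[of z r K] by (intro mult_left_mono) auto
  finally have "s powr \<alpha> * K * (r - s) \<le> z powr (\<alpha> - 1) * (\<alpha> * b) * (r - s)"
    using assms(2) by (intro mult_right_mono) auto
  also have "\<dots> = (r powr \<alpha> - s powr \<alpha>) * b"
    unfolding z(3) by (simp add: algebra_simps)
  finally have "s powr \<alpha> * K * (r - s) \<le> (r powr \<alpha> - s powr \<alpha>) * b" .
  moreover have "s powr \<alpha> * a \<le> s powr \<alpha> * (b + K * (r - s))"
    using assms(6) by (intro mult_left_mono) auto
  ultimately show ?thesis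
    by (simp add: algebra_simps)
qed

lemma powr_weighted_le_of_decay:
  fixes r s \<alpha> \<delta> M a b :: real
  assumes "0 < s" "0 < r" "a \<le> M" "\<delta> * r powr (-2 * \<alpha>) \<le> b" "(r * s) powr \<alpha> * M \<le> \<delta>"
  shows "s powr \<alpha> * a \<le> r powr \<alpha> * b"
proof -
  have "s powr \<alpha> * a \<le> s powr \<alpha> * M"
    using assms(3) by (simp add: mult_left_mono)
  also have "\<dots> = (r * s) powr \<alpha> * M / r powr \<alpha>"
    using assms(1,2) by (simp add: powr_mult)
  also have "\<dots> \<le> \<delta> / r powr \<alpha>"
    using assms(5) by (simp add: divide_right_mono)
  also have "\<dots> = r powr \<alpha> * (\<delta> * r powr (-2 * \<alpha>))"
    using assms(2) by (simp add: powr_minus_divide powr_add[symmetric] field_simps)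
  also have "\<dots> \<le> r powr \<alpha> * b"
    using assms(4) by (simp add: mult_left_mono)
  finally show ?thesis .
qed

lemma continuous_attains_inf_coercive:
  fixes f :: "'a::{heine_borel,real_normed_vector} \<Rightarrow> real"
  assumes "closed S" "continuous_on S f" "y \<in> S"
    and "\<And>z. z \<in> S \<Longrightarrow> R \<le> norm z \<Longrightarrow> f y \<le> f z"
  shows "\<exists>x\<in>S. \<forall>z\<in>S. f x \<le> f z"
proof -
  define K where "K = S \<inter> cball 0 (max R (norm y))"
  have "compact K" "y \<in> K" "K \<subseteq> S"
    using assms(1,3) by (auto simp: K_def compact_Int_closed)
  then obtain x where x: "x \<in> K" "\<And>z. z \<in> K \<Longrightarrow> f x \<le> f z"
    using continuous_attains_inf[OF \<open>compact K\<close> _ continuous_on_subset[OF assms(2)]] by blast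
  have "f x \<le> f z" if "z \<in> S" for z
  proof (cases "z \<in> K")
    case False
    hence "R \<le> norm z"
      using that by (auto simp: K_def)
    thus ?thesis
      using x(2)[OF \<open>y \<in> K\<close>] assms(4)[OF that] by linarith
  qed (use x in auto)
  thus ?thesis
    using x(1) by (auto simp: K_def)
qed

section \<open>Derivatives along coordinate lines\<close>

lemma has_real_derivative_line_shift:
  fixes f :: "'a::real_vector \<Rightarrow> real"
  assumes "((\<lambda>t. f (y + s *\<^sub>R i + t *\<^sub>R i)) has_real_derivative D) (at 0)"
  shows "((\<lambda>t. f (y + t *\<^sub>R i)) has_real_derivative D) (at s)"
proof -
  have "((\<lambda>t. f (y + (t + s) *\<^sub>R i)) has_real_derivative D) (at 0)"
    using assms by (simp add: algebra_simps)
  thus ?thesis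
    using DERIV_shift[of "\<lambda>t. f (y + t *\<^sub>R i)" D 0 s] by simp
qed

lemma line_segment_bound:
  fixes u :: "'a::real_normed_vector \<Rightarrow> real"
  assumes "\<And>s. s \<in> {min 0 d..max 0 d} \<Longrightarrow> ((\<lambda>t. u (z + s *\<^sub>R j + t *\<^sub>R j)) has_real_derivative g s) (at 0)"
    and "\<And>s. s \<in> {min 0 d..max 0 d} \<Longrightarrow> \<bar>g s\<bar> \<le> K"
  shows "\<bar>u (z + d *\<^sub>R j) - u z\<bar> \<le> K * \<bar>d\<bar>"
proof -
  have "\<bar>u (z + d *\<^sub>R j) - u (z + 0 *\<^sub>R j)\<bar> \<le> K * \<bar>d - 0\<bar>"
  proof (rule field_differentiable_bound[where S = "{min 0 d..max 0 d}", simplified real_norm_def])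
    show "((\<lambda>s. u (z + s *\<^sub>R j)) has_real_derivative g s) (at s within {min 0 d..max 0 d})"
      if "s \<in> {min 0 d..max 0 d}" for s
      by (rule has_field_derivative_at_within[OF has_real_derivative_line_shift[where f = u, OF assms(1)[OF that]]])
  qed (use assms(2) in auto)
  thus ?thesis
    by simp
qed

(* The sum of the D i plays the role of the Laplacian of f at y. *)
definition line_second_derivs :: "('a::euclidean_space \<Rightarrow> real) \<Rightarrow> 'a \<Rightarrow> real \<Rightarrow> ('a \<Rightarrow> real) \<Rightarrow> bool"
  where "line_second_derivs f y r D \<longleftrightarrow>
    (\<forall>i\<in>Basis. \<exists>f'. (\<forall>s. \<bar>s\<bar> < r \<longrightarrow> ((\<lambda>s. f (y + s *\<^sub>R i)) has_real_derivative f' s) (at s))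
                  \<and> (f' has_real_derivative D i) (at 0))"

lemma line_second_derivsI:
  assumes "\<And>i s. i \<in> Basis \<Longrightarrow> \<bar>s\<bar> < r \<Longrightarrow> ((\<lambda>s. f (y + s *\<^sub>R i)) has_real_derivative f' i s) (at s)"
    and "\<And>i. i \<in> Basis \<Longrightarrow> (f' i has_real_derivative D i) (at 0)"
  shows "line_second_derivs f y r D"
  using assms unfolding line_second_derivs_def by blast

lemma line_second_derivsE:
  assumes "line_second_derivs f y r D" "i \<in> Basis"
  obtains f' where "\<And>s. \<bar>s\<bar> < r \<Longrightarrow> ((\<lambda>s. f (y + s *\<^sub>R i)) has_real_derivative f' s) (at s)"
    and "(f' has_real_derivative D i) (at 0)"
  using assms unfolding line_second_derivs_def by blast

lemma line_second_derivs_add: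
  assumes f: "line_second_derivs f y r D" and g: "line_second_derivs g y r E"
  shows "line_second_derivs (\<lambda>z. f z + g z) y r (\<lambda>i. D i + E i)"
proof -
  have "\<exists>h'. (\<forall>s. \<bar>s\<bar> < r \<longrightarrow> ((\<lambda>s. f (y + s *\<^sub>R i) + g (y + s *\<^sub>R i)) has_real_derivative h' s) (at s))
            \<and> (h' has_real_derivative D i + E i) (at 0)" if "i \<in> Basis" for i
  proof -
    obtain f' where "\<And>s. \<bar>s\<bar> < r \<Longrightarrow> ((\<lambda>s. f (y + s *\<^sub>R i)) has_real_derivative f' s) (at s)"
      "(f' has_real_derivative D i) (at 0)"
      using line_second_derivsE[OF f \<open>i \<in> Basis\<close>] by blast
    moreover obtain g' where "\<And>s. \<bar>s\<bar> < r \<Longrightarrow> ((\<lambda>s. g (y + s *\<^sub>R i)) has_real_derivative g' s) (at s)"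
      "(g' has_real_derivative E i) (at 0)"
      using line_second_derivsE[OF g \<open>i \<in> Basis\<close>] by blast
    ultimately show ?thesis
      by (intro exI[of _ "\<lambda>s. f' s + g' s"] conjI allI impI DERIV_add) simp_all
  qed
  thus ?thesis
    unfolding line_second_derivs_def by blast
qed

lemma line_second_derivs_cmult:
  assumes f: "line_second_derivs f y r D"
  shows "line_second_derivs (\<lambda>z. a * f z) y r (\<lambda>i. a * D i)"
proof -
  have "\<exists>h'. (\<forall>s. \<bar>s\<bar> < r \<longrightarrow> ((\<lambda>s. a * f (y + s *\<^sub>R i)) has_real_derivative h' s) (at s))
            \<and> (h' has_real_derivative a * D i) (at 0)" if "i \<in> Basis" for i
  proof -
    obtain f' where "\<And>s. \<bar>s\<bar> < r \<Longrightarrow> ((\<lambda>s. f (y + s *\<^sub>R i)) has_real_derivative f' s) (at s)"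
      "(f' has_real_derivative D i) (at 0)"
      using line_second_derivsE[OF f \<open>i \<in> Basis\<close>] by blast
    thus ?thesis
      by (intro exI[of _ "\<lambda>s. a * f' s"] conjI allI impI DERIV_cmult) simp_all
  qed
  thus ?thesis
    unfolding line_second_derivs_def by blast
qed

lemma laplacian_ge_at_local_min:
  fixes u f :: "'a::euclidean_space \<Rightarrow> real"
  assumes C2: "C2_on S u" and "0 < r" "ball y r \<subseteq> S" and f: "line_second_derivs f y r D"
    and min: "\<And>z. z \<in> ball y r \<Longrightarrow> u y - f y \<le> u z - f z"
  shows "(\<Sum>i\<in>Basis. D i) \<le> laplacian u y"
  unfolding laplacian_def
proof (rule sum_mono)
  fix i :: 'a assume i: "i \<in> Basis"
  obtain f' where f': "\<And>s. \<bar>s\<bar> < r \<Longrightarrow> ((\<lambda>s. f (y + s *\<^sub>R i)) has_real_derivative f' s) (at s)"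
      "(f' has_real_derivative D i) (at 0)"
    using line_second_derivsE[OF f i] by blast
  have line: "y + s *\<^sub>R i \<in> S" if "\<bar>s\<bar> < r" for s
    using that i assms(3) by (auto simp: dist_norm)
  have du: "((\<lambda>s. u (y + s *\<^sub>R i)) has_real_derivative pd u i (y + s *\<^sub>R i)) (at s)"
    if "\<bar>s\<bar> < r" for s
  proof (rule has_real_derivative_line_shift)
    have "(\<lambda>t. u (y + s *\<^sub>R i + t *\<^sub>R i)) differentiable at 0"
      using C2 i line[OF that] unfolding C2_on_def by blast
    thus "((\<lambda>t. u (y + s *\<^sub>R i + t *\<^sub>R i)) has_real_derivative pd u i (y + s *\<^sub>R i)) (at 0)"
      unfolding pd_def by (simp add: DERIV_deriv_iff_real_differentiable)
  qed
  have d2u: "((\<lambda>s. pd u i (y + s *\<^sub>R i)) has_real_derivative pd (pd u i) i y) (at 0)"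
  proof -
    have "(\<lambda>s. pd u i (y + s *\<^sub>R i)) differentiable at 0"
      using C2 i line[of 0] \<open>0 < r\<close> unfolding C2_on_def by auto
    thus ?thesis
      unfolding pd_def[of "pd u i"] by (simp add: DERIV_deriv_iff_real_differentiable)
  qed
  have "0 \<le> pd (pd u i) i y - D i"
  proof (rule DERIV2_local_min_nonneg[OF \<open>0 < r\<close>])
    show "((\<lambda>s. u (y + s *\<^sub>R i) - f (y + s *\<^sub>R i)) has_real_derivative pd u i (y + s *\<^sub>R i) - f' s) (at s)"
      if "\<bar>s\<bar> < r" for s
      using du[OF that] f'(1)[OF that] by (rule DERIV_diff)
    show "((\<lambda>s. pd u i (y + s *\<^sub>R i) - f' s) has_real_derivative pd (pd u i) i y - D i) (at 0)"
      using d2u f'(2) by (rule DERIV_diff)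
    show "u (y + 0 *\<^sub>R i) - f (y + 0 *\<^sub>R i) \<le> u (y + s *\<^sub>R i) - f (y + s *\<^sub>R i)" if "\<bar>s\<bar> < r" for s
      using min[of "y + s *\<^sub>R i"] that i by (simp add: dist_norm)
  qed
  thus "D i \<le> pd (pd u i) i y"
    by simp
qed

(* Only partial derivatives are available, so u is followed along a path that changes one
   coordinate at a time. *)
lemma staircase_bound:
  fixes u :: "'a::euclidean_space \<Rightarrow> real" and a b :: 'a
  assumes D: "\<And>z i. z \<in> S \<Longrightarrow> i \<in> Basis \<Longrightarrow> ((\<lambda>s. u (z + s *\<^sub>R i)) has_real_derivative g i z) (at 0)"
    and bnd: "\<And>z i. z \<in> S \<Longrightarrow> i \<in> Basis \<Longrightarrow> \<bar>g i z\<bar> \<le> K"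
    and box: "\<And>z. (\<And>i. i \<in> Basis \<Longrightarrow> min (a \<bullet> i) (b \<bullet> i) \<le> z \<bullet> i \<and> z \<bullet> i \<le> max (a \<bullet> i) (b \<bullet> i)) \<Longrightarrow> z \<in> S"
  shows "\<bar>u b - u a\<bar> \<le> K * (\<Sum>i\<in>Basis. \<bar>(b - a) \<bullet> i\<bar>)"
proof -
  define p where "p T = a + (\<Sum>k\<in>T. ((b - a) \<bullet> k) *\<^sub>R k)" for T
  have p_coord: "p T \<bullet> i = (if i \<in> T then b \<bullet> i else a \<bullet> i)" if "T \<subseteq> Basis" "i \<in> Basis" for T i
  proof -
    have "(\<Sum>k\<in>T. ((b - a) \<bullet> k) *\<^sub>R k) \<bullet> i = (\<Sum>k\<in>T. if k = i then (b - a) \<bullet> k else 0)"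
      unfolding inner_sum_left using that by (intro sum.cong) (auto simp: inner_Basis)
    thus ?thesis
      using that finite_subset[OF that(1)] by (simp add: p_def inner_diff_left inner_add_left)
  qed
  have partial: "\<bar>u (p T) - u a\<bar> \<le> K * (\<Sum>i\<in>T. \<bar>(b - a) \<bullet> i\<bar>)" if "T \<subseteq> Basis" for T
    using finite_subset[OF that finite_Basis] that
  proof (induction T rule: finite_induct)
    case empty
    thus ?case
      by (simp add: p_def)
  next
    case (insert j T)
    define d where "d = (b - a) \<bullet> j"
    have "T \<subseteq> Basis" "j \<in> Basis"
      using insert.prems by auto
    have step: "p T + s *\<^sub>R j \<in> S" if "s \<in> {min 0 d..max 0 d}" for s
    proof (rule box)
      fix i :: 'a assume "i \<in> Basis"
      have "(p T + s *\<^sub>R j) \<bullet> i = (if i = j then a \<bullet> j + s else if i \<in> T then b \<bullet> i else a \<bullet> i)"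
        using p_coord[OF \<open>T \<subseteq> Basis\<close> \<open>i \<in> Basis\<close>] \<open>j \<notin> T\<close> \<open>i \<in> Basis\<close> \<open>j \<in> Basis\<close>
        by (auto simp: inner_add_left inner_Basis)
      moreover have "min (a \<bullet> j) (b \<bullet> j) \<le> a \<bullet> j + s \<and> a \<bullet> j + s \<le> max (a \<bullet> j) (b \<bullet> j)"
        using that by (auto simp: d_def inner_diff_left)
      ultimately show "min (a \<bullet> i) (b \<bullet> i) \<le> (p T + s *\<^sub>R j) \<bullet> i \<and> (p T + s *\<^sub>R j) \<bullet> i \<le> max (a \<bullet> i) (b \<bullet> i)"
        by auto
    qed
    have "\<bar>u (p T + d *\<^sub>R j) - u (p T)\<bar> \<le> K * \<bar>d\<bar>"
      using D[OF step \<open>j \<in> Basis\<close>] bnd[OF step \<open>j \<in> Basis\<close>] by (rule line_segment_bound)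
    moreover have "p (insert j T) = p T + d *\<^sub>R j"
      using insert.hyps by (simp add: p_def d_def add.assoc)
    ultimately have "\<bar>u (p (insert j T)) - u (p T)\<bar> \<le> K * \<bar>(b - a) \<bullet> j\<bar>"
      by (simp add: d_def)
    thus ?case
      using insert.IH[OF \<open>T \<subseteq> Basis\<close>] insert.hyps by (simp add: distrib_left)
  qed
  moreover have "p Basis = b"
    by (simp add: p_def euclidean_representation)
  ultimately show ?thesis
    using partial[of Basis] by simp
qed

lemma sum_abs_inner_Basis_le:
  fixes x :: "'a::euclidean_space"
  shows "(\<Sum>i\<in>Basis. \<bar>x \<bullet> i\<bar>) \<le> real DIM('a) * norm x"
proof -
  have "(\<Sum>i\<in>Basis. \<bar>x \<bullet> i\<bar>) \<le> of_nat (card (Basis :: 'a set)) * norm x"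
    by (rule sum_bounded_above) (rule Basis_le_norm)
  thus ?thesis
    by simp
qed

section \<open>Barrier functions\<close>

lemma norm_powr_eq_inner_powr:
  fixes z :: "'a::real_inner"
  shows "norm z powr b = (z \<bullet> z) powr (b / 2)"
  by (simp add: norm_eq_sqrt_inner powr_half_sqrt[symmetric] powr_powr)

lemma norm_powr_line_deriv:
  fixes y c i :: "'a::real_inner"
  assumes "y \<noteq> c"
  shows "((\<lambda>s. norm (y + s *\<^sub>R i - c) powr b) has_real_derivative
           b * norm (y - c) powr (b - 2) * ((y - c) \<bullet> i)) (at 0)"
proof -
  define d where "d = y - c"
  define Q where "Q s = d \<bullet> d + 2 * s * (d \<bullet> i) + s\<^sup>2 * (i \<bullet> i)" for s
  have eq: "norm (y + s *\<^sub>R i - c) powr b = Q s powr (b / 2)" for s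
  proof -
    have "y + s *\<^sub>R i - c = d + s *\<^sub>R i"
      by (simp add: d_def algebra_simps)
    hence "norm (y + s *\<^sub>R i - c) powr b = ((d + s *\<^sub>R i) \<bullet> (d + s *\<^sub>R i)) powr (b / 2)"
      by (simp only: norm_powr_eq_inner_powr)
    also have "(d + s *\<^sub>R i) \<bullet> (d + s *\<^sub>R i) = Q s"
      by (simp add: Q_def inner_commute power2_eq_square algebra_simps)
    finally show ?thesis .
  qed
  have "(Q has_real_derivative 2 * (d \<bullet> i)) (at 0)"
    unfolding Q_def by (auto intro!: derivative_eq_intros)
  moreover have "0 < Q 0"
    using assms by (simp add: Q_def d_def)
  ultimately have "((\<lambda>s. Q s powr (b / 2)) has_real_derivative b / 2 * Q 0 powr (b / 2 - 1) * (2 * (d \<bullet> i))) (at 0)"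
    using DERIV_fun_powr[of Q "2 * (d \<bullet> i)" 0 "b / 2"] by simp
  moreover have "Q 0 powr (b / 2 - 1) = norm d powr (b - 2)"
    by (simp add: Q_def norm_powr_eq_inner_powr diff_divide_distrib)
  ultimately show ?thesis
    by (simp add: eq d_def mult.assoc)
qed

definition radial_second_deriv :: "'a::real_inner \<Rightarrow> real \<Rightarrow> 'a \<Rightarrow> 'a \<Rightarrow> real"
  where "radial_second_deriv c b y i =
    b * (b - 2) * norm (y - c) powr (b - 4) * ((y - c) \<bullet> i)\<^sup>2 + b * norm (y - c) powr (b - 2)"

lemma norm_powr_line_second_derivs:
  fixes y c :: "'a::euclidean_space"
  assumes "0 < r" "r \<le> norm (y - c)"
  shows "line_second_derivs (\<lambda>z. norm (z - c) powr b) y r (radial_second_deriv c b y)"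
proof (rule line_second_derivsI[where f'="\<lambda>i s. b * norm (y + s *\<^sub>R i - c) powr (b - 2) * ((y + s *\<^sub>R i - c) \<bullet> i)"])
  fix i :: 'a and s :: real
  assume i: "i \<in> Basis" and s: "\<bar>s\<bar> < r"
  have "norm (y - c) - \<bar>s\<bar> \<le> norm (y + s *\<^sub>R i - c)"
    using norm_triangle_ineq2[of "y - c" "- s *\<^sub>R i"] i by (simp add: algebra_simps)
  hence "y + s *\<^sub>R i \<noteq> c"
    using s assms(2) by auto
  from norm_powr_line_deriv[OF this, of i b]
  show "((\<lambda>s. norm (y + s *\<^sub>R i - c) powr b) has_real_derivative
          b * norm (y + s *\<^sub>R i - c) powr (b - 2) * ((y + s *\<^sub>R i - c) \<bullet> i)) (at s)"
    by (rule has_real_derivative_line_shift[where f="\<lambda>z. norm (z - c) powr b"])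
next
  fix i :: 'a
  assume i: "i \<in> Basis"
  have "y \<noteq> c"
    using assms by auto
  have d1: "((\<lambda>s. norm (y + s *\<^sub>R i - c) powr (b - 2)) has_real_derivative
             (b - 2) * norm (y - c) powr (b - 2 - 2) * ((y - c) \<bullet> i)) (at 0)"
    by (rule norm_powr_line_deriv[OF \<open>y \<noteq> c\<close>])
  have d2: "((\<lambda>s. (y - c) \<bullet> i + s) has_real_derivative 1) (at 0)"
    by (auto intro!: derivative_eq_intros)
  have "((\<lambda>s. b * (norm (y + s *\<^sub>R i - c) powr (b - 2) * ((y - c) \<bullet> i + s))) has_real_derivative
          b * ((b - 2) * norm (y - c) powr (b - 2 - 2) * ((y - c) \<bullet> i) * ((y - c) \<bullet> i + 0)
               + 1 * norm (y + 0 *\<^sub>R i - c) powr (b - 2))) (at 0)"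
    by (intro DERIV_cmult DERIV_mult d1 d2)
  moreover have "(\<lambda>s. b * norm (y + s *\<^sub>R i - c) powr (b - 2) * ((y + s *\<^sub>R i - c) \<bullet> i))
      = (\<lambda>s. b * (norm (y + s *\<^sub>R i - c) powr (b - 2) * ((y - c) \<bullet> i + s)))"
    using i by (simp add: algebra_simps)
  ultimately show "((\<lambda>s. b * norm (y + s *\<^sub>R i - c) powr (b - 2) * ((y + s *\<^sub>R i - c) \<bullet> i)) has_real_derivative
          radial_second_deriv c b y i) (at 0)"
    by (auto elim!: DERIV_cong simp: radial_second_deriv_def power2_eq_square algebra_simps)
qed

lemma sum_radial_second_deriv:
  fixes y c :: "'a::euclidean_space"
  assumes "y \<noteq> c"
  shows "(\<Sum>i\<in>Basis. radial_second_deriv c b y i) = b * (b + real DIM('a) - 2) * norm (y - c) powr (b - 2)"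
proof -
  define d where "d = y - c"
  have "(\<Sum>i\<in>Basis. (d \<bullet> i)\<^sup>2) = (norm d)\<^sup>2"
    unfolding power2_norm_eq_inner euclidean_inner[of d d] by (simp add: power2_eq_square)
  moreover have "norm d powr (b - 4) * (norm d)\<^sup>2 = norm d powr (b - 2)"
    using assms by (simp add: d_def powr_add[symmetric] flip: powr_numeral)
  moreover have "(\<Sum>i\<in>Basis. radial_second_deriv c b y i)
      = b * (b - 2) * (norm d powr (b - 4) * (\<Sum>i\<in>Basis. (d \<bullet> i)\<^sup>2)) + real DIM('a) * (b * norm d powr (b - 2))"
    by (simp add: radial_second_deriv_def d_def sum.distrib sum_distrib_left mult.assoc)
  ultimately show ?thesis
    by (simp add: d_def algebra_simps)
qed

(* For A > n the Laplacian 2 A - 2 n is positive, so a small multiple lies below u. *)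
definition hopf_barrier :: "'a::real_inner \<Rightarrow> real \<Rightarrow> 'a \<Rightarrow> real"
  where "hopf_barrier e A y = y \<bullet> e + A * (y \<bullet> e)\<^sup>2 - (norm y)\<^sup>2"

lemma hopf_barrier_line_second_derivs:
  fixes e :: "'a::euclidean_space"
  shows "line_second_derivs (hopf_barrier e A) y r (\<lambda>i. 2 * A * (i \<bullet> e)\<^sup>2 - 2)"
proof (rule line_second_derivsI[where f'="\<lambda>i s. i \<bullet> e + 2 * A * (y \<bullet> e + s * (i \<bullet> e)) * (i \<bullet> e) - 2 * (y \<bullet> i) - 2 * s"])
  fix i :: 'a and s :: real
  assume i: "i \<in> Basis"
  have "(\<lambda>t. hopf_barrier e A (y + t *\<^sub>R i))
          = (\<lambda>t. y \<bullet> e + t * (i \<bullet> e) + A * (y \<bullet> e + t * (i \<bullet> e))\<^sup>2 - ((y \<bullet> y) + 2 * t * (y \<bullet> i) + t\<^sup>2))"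
    using i unfolding hopf_barrier_def power2_norm_eq_inner
    by (simp add: inner_commute power2_eq_square algebra_simps)
  thus "((\<lambda>t. hopf_barrier e A (y + t *\<^sub>R i)) has_real_derivative
          i \<bullet> e + 2 * A * (y \<bullet> e + s * (i \<bullet> e)) * (i \<bullet> e) - 2 * (y \<bullet> i) - 2 * s) (at s)"
    by (auto intro!: derivative_eq_intros simp: algebra_simps)
next
  fix i :: 'a
  show "((\<lambda>s. i \<bullet> e + 2 * A * (y \<bullet> e + s * (i \<bullet> e)) * (i \<bullet> e) - 2 * (y \<bullet> i) - 2 * s)
          has_real_derivative 2 * A * (i \<bullet> e)\<^sup>2 - 2) (at 0)"
    by (auto intro!: derivative_eq_intros simp: power2_eq_square algebra_simps)
qed

lemma sum_hopf_barrier_second_derivs: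
  fixes e :: "'a::euclidean_space"
  assumes "e \<in> Basis"
  shows "(\<Sum>i\<in>Basis. 2 * A * (i \<bullet> e)\<^sup>2 - 2) = 2 * A - 2 * real DIM('a)"
proof -
  have "(\<Sum>i\<in>Basis. (i \<bullet> e)\<^sup>2) = (\<Sum>i\<in>Basis. if i = e then 1 else 0)"
    by (rule sum.cong) (auto simp: inner_Basis assms)
  also have "\<dots> = 1"
    using assms by simp
  finally have "(\<Sum>i\<in>Basis. (i \<bullet> e)\<^sup>2) = 1" .
  thus ?thesis
    by (simp add: sum_subtractf sum_distrib_left[symmetric])
qed

lemma hopf_barrier_le:
  fixes e y :: "'a::euclidean_space"
  assumes "e \<in> Basis" "0 \<le> y \<bullet> e" "norm y \<le> 1" "0 \<le> A"
  shows "hopf_barrier e A y \<le> 1 + A"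
proof -
  have "y \<bullet> e \<le> 1"
    using Basis_le_norm[OF assms(1), of y] assms(3) by simp
  hence "A * (y \<bullet> e)\<^sup>2 \<le> A"
    using assms(2,4) mult_left_mono[of "(y \<bullet> e)\<^sup>2" 1 A] by (simp add: power_le_one)
  thus ?thesis
    using \<open>y \<bullet> e \<le> 1\<close> zero_le_power2[of "norm y"] unfolding hopf_barrier_def by linarith
qed

lemma hopf_barrier_nonpos:
  fixes e y :: "'a::euclidean_space"
  assumes "e \<in> Basis" "0 \<le> y \<bullet> e" "y \<bullet> e = 0 \<or> norm y = 1 \<and> y \<bullet> e \<le> t" "t * (1 + A) \<le> 1" "0 \<le> A"
  shows "hopf_barrier e A y \<le> 0"
  using assms(3)
proof
  assume "norm y = 1 \<and> y \<bullet> e \<le> t"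
  moreover have "y \<bullet> e \<le> 1"
    using Basis_le_norm[OF assms(1), of y] calculation by simp
  ultimately have "(y \<bullet> e)\<^sup>2 \<le> t"
    using assms(2) mult_left_mono[of "y \<bullet> e" 1 "y \<bullet> e"] by (simp add: power2_eq_square)
  hence "A * (y \<bullet> e)\<^sup>2 \<le> A * t"
    using assms(5) by (rule mult_left_mono)
  thus ?thesis
    using \<open>norm y = 1 \<and> y \<bullet> e \<le> t\<close> assms(4) by (simp add: hopf_barrier_def algebra_simps)
qed (simp add: hopf_barrier_def)

lemma hopf_barrier_axis:
  fixes e :: "'a::euclidean_space"
  assumes "e \<in> Basis"
  shows "hopf_barrier e A (s *\<^sub>R e) = s + (A - 1) * s\<^sup>2"
  using assms by (simp add: hopf_barrier_def algebra_simps)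

(* The first term is harmonic; the second contributes the Laplacian (n - 1) |z|^(-1-n), which
   dominates the nonlinearity applied to a small multiple of the profile. *)
definition decay_profile :: "real \<Rightarrow> 'a::real_normed_vector \<Rightarrow> real"
  where "decay_profile n z = norm z powr (2 - n) + norm z powr (1 - n)"

lemma decay_profile_subsolution:
  fixes n \<delta> r0 :: real and z :: "'a::real_normed_vector"
  assumes "3 \<le> n" "0 < \<delta>" "0 < r0" "r0 \<le> norm z"
    and small: "\<delta> powr ((n + 2) / (n - 2) - 1) * (1 + 1 / r0) powr ((n + 2) / (n - 2))
                  \<le> (n - 1) * r0 / (n * (n - 2))"
  shows "n * (n - 2) * (\<delta> * decay_profile n z) powr ((n + 2) / (n - 2)) \<le> \<delta> * (n - 1) * norm z powr (-1 - n)"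
proof -
  define p where "p = (n + 2) / (n - 2)"
  define r where "r = norm z"
  have "0 < r" "0 < p" "0 < n * (n - 2)"
    using assms by (auto simp: p_def r_def)
  have "r powr (1 - n) = r powr (2 - n) * r powr (-1)"
    unfolding powr_add[symmetric] by simp
  hence "decay_profile n z = r powr (2 - n) * (1 + 1 / r)"
    using \<open>0 < r\<close> by (simp add: decay_profile_def r_def distrib_left powr_minus_divide)
  moreover have "(2 - n) * p = (-1 - n) - 1"
    using assms(1) by (simp add: p_def field_simps)
  hence "r powr ((2 - n) * p) = r powr (-1 - n) / r"
    using powr_diff[of r "-1 - n" 1] \<open>0 < r\<close> by simp
  ultimately have "decay_profile n z powr p = r powr (-1 - n) / r * (1 + 1 / r) powr p"
    using \<open>0 < r\<close> by (simp add: powr_mult powr_powr)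
  also have "\<dots> \<le> r powr (-1 - n) / r * (1 + 1 / r0) powr p"
    using \<open>0 < r\<close> assms(3,4) \<open>0 < p\<close> by (intro mult_left_mono powr_mono2) (auto simp: r_def field_simps)
  finally have "\<delta> powr (p - 1) * decay_profile n z powr p
      \<le> \<delta> powr (p - 1) * (r powr (-1 - n) / r * (1 + 1 / r0) powr p)"
    by (rule mult_left_mono) simp
  also have "\<dots> = r powr (-1 - n) / r * (\<delta> powr (p - 1) * (1 + 1 / r0) powr p)"
    by (simp add: ac_simps)
  also have "\<dots> \<le> r powr (-1 - n) / r * ((n - 1) * r / (n * (n - 2)))"
  proof (rule mult_left_mono)
    have "(n - 1) * r0 / (n * (n - 2)) \<le> (n - 1) * r / (n * (n - 2))"
      using assms(1,4) by (intro divide_right_mono mult_left_mono) (auto simp: r_def)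
    thus "\<delta> powr (p - 1) * (1 + 1 / r0) powr p \<le> (n - 1) * r / (n * (n - 2))"
      using small[folded p_def] by linarith
  qed (use \<open>0 < r\<close> in simp)
  also have "\<dots> = (n - 1) / (n * (n - 2)) * r powr (-1 - n)"
    using \<open>0 < r\<close> by simp
  finally have "(\<delta> * decay_profile n z) powr p \<le> \<delta> * ((n - 1) / (n * (n - 2)) * r powr (-1 - n))"
    using \<open>0 < \<delta>\<close> by (intro powr_mult_le_of_small) (auto simp: decay_profile_def)
  thus ?thesis
    using \<open>0 < n * (n - 2)\<close> by (simp add: p_def r_def field_simps)
qed

lemma decay_profile_le_at_infinity:
  fixes y e :: "'a::real_normed_vector"
  assumes "3 \<le> n" "norm e = 1" "1 \<le> norm y" "y + e \<noteq> 0"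
  shows "decay_profile n y \<le> 4 / sqrt (norm y) * norm (y + e) powr (-1/2)"
proof -
  define r where "r = norm y"
  have "r powr (2 - n) \<le> r powr (-1)"
    using assms(1,3) unfolding r_def by (intro powr_mono) auto
  moreover have "r powr (1 - n) \<le> r powr (-1)"
    using assms(1,3) unfolding r_def by (intro powr_mono) auto
  ultimately have "decay_profile n y \<le> 2 / r"
    using assms(3) by (simp add: decay_profile_def r_def powr_minus_divide)
  also have "\<dots> = 4 / (2 * r)"
    by simp
  also have "\<dots> \<le> 4 / (sqrt 2 * r)"
    using assms(3) sqrt2_less_2 by (intro divide_left_mono mult_right_mono) (auto simp: r_def intro!: mult_pos_pos)
  also have "\<dots> = 4 / sqrt r * (1 / sqrt (2 * r))"
    using assms(3) by (simp add: r_def real_sqrt_mult field_simps)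
  also have "\<dots> \<le> 4 / sqrt r * norm (y + e) powr (-1/2)"
  proof (rule mult_left_mono)
    have "norm (y + e) \<le> 2 * r"
      using norm_triangle_ineq[of y e] assms(2,3) by (simp add: r_def)
    hence "(2 * r) powr (-1/2) \<le> norm (y + e) powr (-1/2)"
      using assms(4) by (intro powr_mono2') auto
    thus "1 / sqrt (2 * r) \<le> norm (y + e) powr (-1/2)"
      using assms(3) by (simp add: r_def powr_minus_divide powr_half_sqrt)
  qed (simp add: r_def)
  finally show ?thesis
    by (simp add: r_def)
qed

lemma exterior_barrier_second_derivs_gt:
  fixes y e :: "'a::euclidean_space" and \<delta> m :: real
  defines "n \<equiv> real DIM('a)"
  assumes "3 \<le> DIM('a)" "0 < \<delta>" "m < 0" "y \<noteq> 0" "y \<noteq> - e"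
  shows "\<delta> * (n - 1) * norm y powr (-1 - n)
           < (\<Sum>i\<in>Basis. \<delta> * (radial_second_deriv 0 (2 - n) y i + radial_second_deriv 0 (1 - n) y i)
                          + m * radial_second_deriv (- e) (-1/2) y i)"
proof -
  have "(\<Sum>i\<in>Basis. radial_second_deriv 0 (2 - n) y i) = 0"
    using sum_radial_second_deriv[OF assms(5), of "2 - n"] by (simp add: n_def)
  moreover have "(\<Sum>i\<in>Basis. radial_second_deriv 0 (1 - n) y i) = (n - 1) * norm y powr (-1 - n)"
    using sum_radial_second_deriv[OF assms(5), of "1 - n"] by (simp add: n_def algebra_simps)
  moreover have "(\<Sum>i\<in>Basis. radial_second_deriv (- e) (-1/2) y i) = - (1/2 * (n - 5/2) * norm (y + e) powr (-5/2))"
    using sum_radial_second_deriv[OF assms(6), of "-1/2"] by (simp add: n_def algebra_simps)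
  moreover have "0 < m * - (1/2 * (n - 5/2) * norm (y + e) powr (-5/2))"
    using assms(2,4,6) by (intro mult_neg_neg) (auto simp: n_def add_eq_0_iff2)
  ultimately show ?thesis
    by (simp add: sum.distrib sum_distrib_left[symmetric] distrib_left)
qed

section \<open>Geometry of the half-space\<close>

lemma closure_halfspace:
  fixes e :: "'a::euclidean_space"
  assumes "e \<noteq> 0"
  shows "closure (halfspace e) = {x. 0 \<le> x \<bullet> e}"
  using closure_halfspace_gt[OF assms, of 0] by (simp add: halfspace_def inner_commute)

lemma compact_half_cball:
  fixes e :: "'a::euclidean_space"
  shows "compact (cball 0 R \<inter> {z. 0 \<le> z \<bullet> e})"
  by (intro compact_Int_closed compact_cball closed_Collect_le continuous_intros)

lemma ball_min_inner_bounds: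
  fixes y z e :: "'a::euclidean_space"
  assumes "e \<in> Basis" "z \<in> ball y (min (y \<bullet> e) t)"
  shows "0 < z \<bullet> e" "norm y - t < norm z" "norm z < norm y + t"
proof -
  have "\<bar>(z - y) \<bullet> e\<bar> \<le> norm (z - y)" "\<bar>norm z - norm y\<bar> \<le> norm (z - y)"
    using Basis_le_norm[OF assms(1)] norm_triangle_ineq3 by auto
  thus "0 < z \<bullet> e" "norm y - t < norm z" "norm z < norm y + t"
    using assms(2) by (auto simp: dist_norm norm_minus_commute inner_diff_left)
qed

lemma ray_box_bounds:
  fixes \<omega> z e :: "'a::euclidean_space"
  assumes "e \<in> Basis" "0 < \<omega> \<bullet> e" "0 < s" "s \<le> r"
    and z: "\<And>i. i \<in> Basis \<Longrightarrow>
              min (s *\<^sub>R \<omega> \<bullet> i) (r *\<^sub>R \<omega> \<bullet> i) \<le> z \<bullet> i \<and> z \<bullet> i \<le> max (s *\<^sub>R \<omega> \<bullet> i) (r *\<^sub>R \<omega> \<bullet> i)"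
  shows "0 < z \<bullet> e" "norm z \<le> norm (r *\<^sub>R \<omega>)"
proof -
  have "0 < s * (\<omega> \<bullet> e)" "s * (\<omega> \<bullet> e) \<le> r * (\<omega> \<bullet> e)"
    using assms(2-4) by (simp_all add: mult_right_mono)
  thus "0 < z \<bullet> e"
    using z[OF assms(1)] by (simp add: min_absorb1)
  have "\<bar>z \<bullet> i\<bar> \<le> \<bar>r *\<^sub>R \<omega> \<bullet> i\<bar>" if "i \<in> Basis" for i
  proof (cases "0 \<le> \<omega> \<bullet> i")
    case True
    hence "0 \<le> s * (\<omega> \<bullet> i)" "s * (\<omega> \<bullet> i) \<le> r * (\<omega> \<bullet> i)"
      using assms(3,4) by (simp_all add: mult_right_mono)
    thus ?thesis
      using z[OF that] by auto
  next
    case False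
    hence "s * (\<omega> \<bullet> i) \<le> 0" "r * (\<omega> \<bullet> i) \<le> s * (\<omega> \<bullet> i)"
      using assms(3,4) by (simp_all add: mult_right_mono_neg mult_nonneg_nonpos)
    thus ?thesis
      using z[OF that] by auto
  qed
  thus "norm z \<le> norm (r *\<^sub>R \<omega>)"
    by (rule norm_le_componentwise)
qed

lemma C1_upto_radial_lipschitz:
  fixes u :: "'a::euclidean_space \<Rightarrow> real"
  assumes e: "e \<in> Basis" and C1: "C1_upto (halfspace e) u"
  shows "\<exists>K\<ge>0. \<forall>\<omega> r s. 0 < \<omega> \<bullet> e \<longrightarrow> norm \<omega> = 1 \<longrightarrow> 0 < s \<longrightarrow> s \<le> r \<longrightarrow> r \<le> 1 \<longrightarrow>
           \<bar>u (r *\<^sub>R \<omega>) - u (s *\<^sub>R \<omega>)\<bar> \<le> K * (r - s)"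
proof -
  have "closure (halfspace e) = {x. 0 \<le> x \<bullet> e}"
    using e by (simp add: closure_halfspace nonzero_Basis)
  then obtain g where g_cont: "\<And>i. i \<in> Basis \<Longrightarrow> continuous_on {x. 0 \<le> x \<bullet> e} (g i)"
    and g_deriv: "\<And>i x. i \<in> Basis \<Longrightarrow> x \<in> halfspace e \<Longrightarrow> ((\<lambda>s. u (x + s *\<^sub>R i)) has_real_derivative g i x) (at 0)"
    using C1 unfolding C1_upto_def by metis
  define D where "D = cball (0::'a) 1 \<inter> {z. 0 \<le> z \<bullet> e}"
  have "bounded (\<Union>i\<in>Basis. g i ` D)"
    using compact_half_cball g_cont
    by (intro bounded_UN finite_Basis ballI compact_imp_bounded compact_continuous_image)
      (auto simp: D_def intro: continuous_on_subset)
  then obtain K1 where K1: "\<And>i z. i \<in> Basis \<Longrightarrow> z \<in> D \<Longrightarrow> \<bar>g i z\<bar> \<le> K1"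
    unfolding bounded_iff by force
  have "0 \<le> K1"
    using K1[OF e, of 0] by (simp add: D_def)
  have "\<bar>u (r *\<^sub>R \<omega>) - u (s *\<^sub>R \<omega>)\<bar> \<le> K1 * real DIM('a) * (r - s)"
    if \<omega>: "0 < \<omega> \<bullet> e" "norm \<omega> = 1" and rs: "0 < s" "s \<le> r" "r \<le> 1" for \<omega> r s
  proof -
    have "\<bar>u (r *\<^sub>R \<omega>) - u (s *\<^sub>R \<omega>)\<bar> \<le> K1 * (\<Sum>i\<in>Basis. \<bar>(r *\<^sub>R \<omega> - s *\<^sub>R \<omega>) \<bullet> i\<bar>)"
    proof (rule staircase_bound[where S = "{z. 0 < z \<bullet> e \<and> norm z \<le> 1}"])
      show "((\<lambda>t. u (z + t *\<^sub>R i)) has_real_derivative g i z) (at 0)"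
        if "z \<in> {z. 0 < z \<bullet> e \<and> norm z \<le> 1}" "i \<in> Basis" for z i
        using g_deriv that by (simp add: halfspace_def)
      show "\<bar>g i z\<bar> \<le> K1" if "z \<in> {z. 0 < z \<bullet> e \<and> norm z \<le> 1}" "i \<in> Basis" for z i
        using K1 that by (simp add: D_def)
      show "z \<in> {z. 0 < z \<bullet> e \<and> norm z \<le> 1}"
        if "\<And>i. i \<in> Basis \<Longrightarrow> min (s *\<^sub>R \<omega> \<bullet> i) (r *\<^sub>R \<omega> \<bullet> i) \<le> z \<bullet> i \<and> z \<bullet> i \<le> max (s *\<^sub>R \<omega> \<bullet> i) (r *\<^sub>R \<omega> \<bullet> i)"
        for z
        using ray_box_bounds[OF e \<omega>(1) rs(1,2) that] \<omega> rs by simp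
    qed
    also have "\<dots> \<le> K1 * (real DIM('a) * norm (r *\<^sub>R \<omega> - s *\<^sub>R \<omega>))"
      using sum_abs_inner_Basis_le \<open>0 \<le> K1\<close> by (rule mult_left_mono)
    also have "norm (r *\<^sub>R \<omega> - s *\<^sub>R \<omega>) = r - s"
      using \<omega> rs by (simp add: scaleR_diff_left[symmetric])
    finally show ?thesis
      by (simp add: mult.assoc)
  qed
  thus ?thesis
    using \<open>0 \<le> K1\<close> by (intro exI[of _ "K1 * real DIM('a)"]) auto
qed

section \<open>The Kelvin transform\<close>

lemma kelvin_difference_eq:
  fixes u :: "'a::real_normed_vector \<Rightarrow> real" and x :: 'a and n l :: real
  assumes "x \<noteq> 0" "0 < l"
  shows "(let v = (\<lambda>y. norm y powr (2 - n) * u ((1 / norm y ^ 2) *\<^sub>R y))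
          in v x - l powr (n - 2) / norm x powr (n - 2) * v ((l\<^sup>2 / norm x ^ 2) *\<^sub>R x))
       = (1 / norm x) powr ((n - 2) / 2) *
           ((1 / norm x) powr ((n - 2) / 2) * u ((1 / norm x) *\<^sub>R sgn x)
            - (norm x / l\<^sup>2) powr ((n - 2) / 2) * u ((norm x / l\<^sup>2) *\<^sub>R sgn x))"
proof -
  define X where "X = norm x"
  have "0 < X"
    using assms(1) by (simp add: X_def)
  have "norm ((l\<^sup>2 / X ^ 2) *\<^sub>R x) = l\<^sup>2 / X"
    using \<open>0 < X\<close> by (simp add: X_def power2_eq_square)
  moreover have "(1 / X ^ 2) *\<^sub>R x = (1 / X) *\<^sub>R sgn x"
    "(1 / (l\<^sup>2 / X) ^ 2) *\<^sub>R ((l\<^sup>2 / X ^ 2) *\<^sub>R x) = (X / l\<^sup>2) *\<^sub>R sgn x"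
    using \<open>0 < X\<close> assms(2) by (simp_all add: X_def sgn_div_norm power2_eq_square field_simps)
  ultimately have lhs: "(let v = (\<lambda>y. norm y powr (2 - n) * u ((1 / norm y ^ 2) *\<^sub>R y))
          in v x - l powr (n - 2) / norm x powr (n - 2) * v ((l\<^sup>2 / norm x ^ 2) *\<^sub>R x))
      = X powr (2 - n) * u ((1 / X) *\<^sub>R sgn x)
        - (l powr (n - 2) / X powr (n - 2) * (l\<^sup>2 / X) powr (2 - n)) * u ((X / l\<^sup>2) *\<^sub>R sgn x)"
    unfolding Let_def X_def[symmetric] by simp
  have "X powr (2 - n) = (1 / X) powr ((n - 2) / 2) * (1 / X) powr ((n - 2) / 2)"
    using \<open>0 < X\<close> by (simp add: powr_def ln_div flip: exp_add) (simp add: field_simps)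
  moreover have "l powr (n - 2) / X powr (n - 2) * (l\<^sup>2 / X) powr (2 - n)
      = (1 / X) powr ((n - 2) / 2) * (X / l\<^sup>2) powr ((n - 2) / 2)"
    using \<open>0 < X\<close> assms(2)
    by (simp add: powr_def ln_div ln_mult ln_realpow flip: exp_add exp_diff) (simp add: field_simps)
  ultimately show ?thesis
    unfolding lhs unfolding X_def[symmetric] by (simp add: algebra_simps)
qed

lemma kelvin_difference_eventually_nonneg:
  fixes u :: "'a::euclidean_space \<Rightarrow> real" and e :: 'a and n :: real
  assumes "\<exists>\<eta>>0. \<forall>\<omega> r s. 0 < \<omega> \<bullet> e \<longrightarrow> norm \<omega> = 1 \<longrightarrow> 0 < s \<longrightarrow> s < r \<longrightarrow> r * s \<le> \<eta> \<longrightarrow>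
             s powr ((n - 2) / 2) * u (s *\<^sub>R \<omega>) \<le> r powr ((n - 2) / 2) * u (r *\<^sub>R \<omega>)"
  shows "\<exists>\<Lambda>>0. \<forall>l\<ge>\<Lambda>. \<forall>x. x \<in> halfspace e \<and> norm x < l \<and> x \<noteq> 0 \<longrightarrow>
           0 \<le> (let v = (\<lambda>y. norm y powr (2 - n) * u ((1 / norm y ^ 2) *\<^sub>R y))
                in v x - l powr (n - 2) / norm x powr (n - 2) * v ((l\<^sup>2 / norm x ^ 2) *\<^sub>R x))"
proof -
  obtain \<eta> where "0 < \<eta>" and mono: "\<And>\<omega> r s. 0 < \<omega> \<bullet> e \<Longrightarrow> norm \<omega> = 1 \<Longrightarrow> 0 < s \<Longrightarrow> s < r \<Longrightarrow> r * s \<le> \<eta> \<Longrightarrow>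
      s powr ((n - 2) / 2) * u (s *\<^sub>R \<omega>) \<le> r powr ((n - 2) / 2) * u (r *\<^sub>R \<omega>)"
    using assms by blast
  show ?thesis
  proof (intro exI[of _ "1 / sqrt \<eta>"] conjI allI impI)
    fix l :: real and x :: 'a
    assume l: "1 / sqrt \<eta> \<le> l" and x: "x \<in> halfspace e \<and> norm x < l \<and> x \<noteq> 0"
    hence "x \<noteq> 0"
      by simp
    have "0 < 1 / sqrt \<eta>"
      using \<open>0 < \<eta>\<close> by simp
    hence "0 < l"
      using l by linarith
    have "(1 / sqrt \<eta>)\<^sup>2 \<le> l\<^sup>2"
      using l \<open>0 < 1 / sqrt \<eta>\<close> by (intro power_mono) auto
    hence "1 / l\<^sup>2 \<le> \<eta>"
      using \<open>0 < \<eta>\<close> \<open>0 < l\<close> by (simp add: field_simps)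
    have "0 < norm x / l\<^sup>2" "norm x / l\<^sup>2 < 1 / norm x"
      using x \<open>0 < l\<close> by (auto simp: field_simps power2_eq_square intro: mult_strict_mono)
    moreover have "1 / norm x * (norm x / l\<^sup>2) \<le> \<eta>"
      using x \<open>1 / l\<^sup>2 \<le> \<eta>\<close> by simp
    moreover have "0 < sgn x \<bullet> e" "norm (sgn x) = 1"
      using x by (auto simp: halfspace_def sgn_div_norm)
    ultimately have "(norm x / l\<^sup>2) powr ((n - 2) / 2) * u ((norm x / l\<^sup>2) *\<^sub>R sgn x)
        \<le> (1 / norm x) powr ((n - 2) / 2) * u ((1 / norm x) *\<^sub>R sgn x)"
      by (intro mono)
    thus "0 \<le> (let v = (\<lambda>y. norm y powr (2 - n) * u ((1 / norm y ^ 2) *\<^sub>R y))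
            in v x - l powr (n - 2) / norm x powr (n - 2) * v ((l\<^sup>2 / norm x ^ 2) *\<^sub>R x))"
      unfolding kelvin_difference_eq[OF \<open>x \<noteq> 0\<close> \<open>0 < l\<close>] by (intro mult_nonneg_nonneg) auto
  qed (use \<open>0 < \<eta>\<close> in simp)
qed

section \<open>Positive solutions in the half-space\<close>

locale yamabe_half_space =
  fixes u :: "'a::euclidean_space \<Rightarrow> real" and e :: 'a and c :: real
  assumes dim: "3 \<le> DIM('a)"
    and e: "e \<in> Basis"
    and c: "0 \<le> c"
    and C2: "C2_on (halfspace e) u"
    and cont: "continuous_on {x. 0 \<le> x \<bullet> e} u"
    and pde: "\<And>x. x \<in> halfspace e \<Longrightarrow> laplacian u x
               = real DIM('a) * (real DIM('a) - 2) * u x powr ((real DIM('a) + 2) / (real DIM('a) - 2))"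
    and pos: "\<And>x. x \<in> halfspace e \<Longrightarrow> 0 < u x"
    and bdry: "\<And>x. x \<bullet> e = 0 \<Longrightarrow> ((\<lambda>s. u (x + s *\<^sub>R e)) has_real_derivative
                 - c * u x powr (real DIM('a) / (real DIM('a) - 2))) (at_right 0)"
begin

lemma u_nonneg:
  assumes "0 \<le> y \<bullet> e"
  shows "0 \<le> u y"
proof (rule continuous_ge_on_closure[where S = "halfspace e"])
  have "closure (halfspace e) = {x. 0 \<le> x \<bullet> e}"
    using e by (simp add: closure_halfspace nonzero_Basis)
  thus "continuous_on (closure (halfspace e)) u" "y \<in> closure (halfspace e)"
    using cont assms by auto
qed (use pos in \<open>simp add: less_imp_le\<close>)

lemma no_interior_local_min:
  defines "n \<equiv> real DIM('a)"
  assumes min: "0 < r" "ball y r \<subseteq> halfspace e" "line_second_derivs f y r D"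
      "\<And>z. z \<in> ball y r \<Longrightarrow> u y - f y \<le> u z - f z"
    and "u y \<le> B" and strict: "n * (n - 2) * B powr ((n + 2) / (n - 2)) < (\<Sum>i\<in>Basis. D i)"
  shows False
proof -
  have "y \<in> halfspace e"
    using min(1,2) by auto
  have "3 \<le> n"
    using dim by (simp add: n_def)
  have "(\<Sum>i\<in>Basis. D i) \<le> laplacian u y"
    by (rule laplacian_ge_at_local_min[OF C2 min])
  also have "\<dots> = n * (n - 2) * u y powr ((n + 2) / (n - 2))"
    using pde[OF \<open>y \<in> halfspace e\<close>] by (simp add: n_def)
  also have "\<dots> \<le> n * (n - 2) * B powr ((n + 2) / (n - 2))"
    using pos[OF \<open>y \<in> halfspace e\<close>] \<open>u y \<le> B\<close> \<open>3 \<le> n\<close> by (intro mult_left_mono powr_mono2) auto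
  finally show False
    using strict by simp
qed

lemma hopf_barrier_contact:
  defines "n \<equiv> real DIM('a)"
  defines "A \<equiv> n + 1"
  assumes "0 < \<epsilon>" and t: "t * (1 + A) \<le> 1"
    and cap: "\<And>z. norm z = 1 \<Longrightarrow> t \<le> z \<bullet> e \<Longrightarrow> \<epsilon> * (1 + A) \<le> u z"
    and small: "n * (n - 2) * (\<epsilon> * (1 + A)) powr ((n + 2) / (n - 2)) < 2 * \<epsilon>"
    and y: "0 \<le> y \<bullet> e" "norm y \<le> 1"
    and min: "\<And>z. 0 \<le> z \<bullet> e \<Longrightarrow> norm z \<le> 1 \<Longrightarrow>
                u y - \<epsilon> * hopf_barrier e A y \<le> u z - \<epsilon> * hopf_barrier e A z"
  shows "\<epsilon> * hopf_barrier e A y \<le> u y"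
proof (rule ccontr)
  assume "\<not> ?thesis"
  hence below: "u y < \<epsilon> * hopf_barrier e A y"
    by simp
  have "0 \<le> A" "3 \<le> n"
    using dim by (simp_all add: A_def n_def)
  have "\<epsilon> * hopf_barrier e A y \<le> \<epsilon> * (1 + A)"
    using hopf_barrier_le[OF e y \<open>0 \<le> A\<close>] \<open>0 < \<epsilon>\<close> by simp
  consider "y \<bullet> e = 0 \<or> norm y = 1 \<and> y \<bullet> e \<le> t" | "norm y = 1" "t \<le> y \<bullet> e" | "0 < y \<bullet> e" "norm y < 1"
    using y by linarith
  thus False
  proof cases
    case 1
    hence "hopf_barrier e A y \<le> 0"
      using hopf_barrier_nonpos[OF e y(1) _ t \<open>0 \<le> A\<close>] by simp
    thus False
      using below u_nonneg[OF y(1)] mult_left_mono[of _ 0 \<epsilon>] \<open>0 < \<epsilon>\<close> by fastforce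
  next
    case 2
    thus False
      using below cap[of y] \<open>\<epsilon> * hopf_barrier e A y \<le> \<epsilon> * (1 + A)\<close> by simp
  next
    case 3
    define r where "r = min (y \<bullet> e) (1 - norm y)"
    have "0 < r"
      using 3 by (simp add: r_def)
    have ball: "0 < z \<bullet> e" "norm z < 1" if "z \<in> ball y r" for z
      using ball_min_inner_bounds[OF e that[unfolded r_def]] by auto
    show False
    proof (rule no_interior_local_min[OF \<open>0 < r\<close>])
      show "ball y r \<subseteq> halfspace e"
        using ball by (auto simp: halfspace_def)
      show "line_second_derivs (\<lambda>z. \<epsilon> * hopf_barrier e A z) y r (\<lambda>i. \<epsilon> * (2 * A * (i \<bullet> e)\<^sup>2 - 2))"
        by (intro line_second_derivs_cmult hopf_barrier_line_second_derivs)
      show "u y - \<epsilon> * hopf_barrier e A y \<le> u z - \<epsilon> * hopf_barrier e A z" if "z \<in> ball y r" for z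
        using min ball[OF that] by simp
      show "u y \<le> \<epsilon> * (1 + A)"
        using below \<open>\<epsilon> * hopf_barrier e A y \<le> \<epsilon> * (1 + A)\<close> by simp
      show "real DIM('a) * (real DIM('a) - 2) * (\<epsilon> * (1 + A)) powr ((real DIM('a) + 2) / (real DIM('a) - 2))
          < (\<Sum>i\<in>Basis. \<epsilon> * (2 * A * (i \<bullet> e)\<^sup>2 - 2))"
        using small sum_hopf_barrier_second_derivs[OF e, of A] by (simp add: A_def n_def flip: sum_distrib_left)
    qed
  qed
qed

lemma u_pos_on_cap:
  assumes "0 < t"
  shows "\<exists>m>0. \<forall>z. norm z = 1 \<longrightarrow> t \<le> z \<bullet> e \<longrightarrow> m \<le> u z"
proof (cases "t \<le> 1")
  case True
  define cap where "cap = sphere (0::'a) 1 \<inter> {z. t \<le> z \<bullet> e}"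
  have "compact cap"
    unfolding cap_def by (intro compact_Int_closed compact_sphere closed_Collect_le continuous_intros)
  moreover have "e \<in> cap"
    using e True by (simp add: cap_def)
  moreover have "continuous_on cap u"
    using assms by (auto intro: continuous_on_subset[OF cont] simp: cap_def)
  ultimately obtain z1 where "z1 \<in> cap" "\<And>z. z \<in> cap \<Longrightarrow> u z1 \<le> u z"
    using continuous_attains_inf[of cap u] by blast
  moreover have "0 < u z1"
    using \<open>z1 \<in> cap\<close> assms pos by (simp add: cap_def halfspace_def)
  ultimately show ?thesis
    by (auto simp: cap_def)
next
  case False
  have "z \<bullet> e \<le> 1" if "norm z = 1" for z
    using Basis_le_norm[OF e, of z] that by simp
  thus ?thesis
    using False by (intro exI[of _ 1]) force
qed

lemma hopf_barrier_below:
  "\<exists>\<epsilon>>0. \<forall>y. 0 \<le> y \<bullet> e \<longrightarrow> norm y \<le> 1 \<longrightarrow> \<epsilon> * hopf_barrier e (real DIM('a) + 1) y \<le> u y"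
proof -
  define n where "n = real DIM('a)"
  define A where "A = n + 1"
  define p where "p = (n + 2) / (n - 2)"
  define t where "t = 1 / (1 + A)"
  have "3 \<le> n" "0 < t" "t * (1 + A) \<le> 1"
    using dim by (auto simp: n_def A_def t_def)
  obtain m where "0 < m" and cap: "\<And>z. norm z = 1 \<Longrightarrow> t \<le> z \<bullet> e \<Longrightarrow> m \<le> u z"
    using u_pos_on_cap[OF \<open>0 < t\<close>] by blast
  have "0 < p - 1" "0 < 1 / (n * (n - 2) * (1 + A) powr p)" "0 < m / (1 + A)"
    using \<open>3 \<le> n\<close> \<open>0 < m\<close> by (auto simp: p_def A_def field_simps)
  then obtain \<epsilon> where "0 < \<epsilon>" "\<epsilon> \<le> m / (1 + A)" and \<epsilon>: "\<epsilon> powr (p - 1) \<le> 1 / (n * (n - 2) * (1 + A) powr p)"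
    using exists_small_powr_le by blast
  have "(\<epsilon> * (1 + A)) powr p \<le> \<epsilon> * (1 / (n * (n - 2)))"
  proof (rule powr_mult_le_of_small)
    show "\<epsilon> powr (p - 1) * (1 + A) powr p \<le> 1 / (n * (n - 2))"
      using mult_right_mono[OF \<epsilon>, of "(1 + A) powr p"] \<open>3 \<le> n\<close> by (simp add: A_def)
  qed (use \<open>0 < \<epsilon>\<close> \<open>3 \<le> n\<close> in \<open>auto simp: A_def\<close>)
  hence small: "n * (n - 2) * (\<epsilon> * (1 + A)) powr p < 2 * \<epsilon>"
    using \<open>3 \<le> n\<close> \<open>0 < \<epsilon>\<close> by (simp add: field_simps)
  define D where "D = cball (0::'a) 1 \<inter> {z. 0 \<le> z \<bullet> e}"
  have "compact D" "0 \<in> D" "D \<subseteq> {z. 0 \<le> z \<bullet> e}"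
    using compact_half_cball by (auto simp: D_def)
  moreover have "continuous_on D (\<lambda>z. u z - \<epsilon> * hopf_barrier e A z)"
    unfolding hopf_barrier_def
    by (intro continuous_intros continuous_on_subset[OF cont \<open>D \<subseteq> {z. 0 \<le> z \<bullet> e}\<close>])
  ultimately obtain y where y: "y \<in> D"
    and min: "\<And>z. z \<in> D \<Longrightarrow> u y - \<epsilon> * hopf_barrier e A y \<le> u z - \<epsilon> * hopf_barrier e A z"
    using continuous_attains_inf[of D "\<lambda>z. u z - \<epsilon> * hopf_barrier e A z"] by blast
  have "\<epsilon> * hopf_barrier e A y \<le> u y"
    unfolding A_def n_def
  proof (rule hopf_barrier_contact[OF \<open>0 < \<epsilon>\<close>])
    show "\<epsilon> * (1 + (real DIM('a) + 1)) \<le> u z" if "norm z = 1" "t \<le> z \<bullet> e" for z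
      using cap[OF that] \<open>\<epsilon> \<le> m / (1 + A)\<close> by (simp add: A_def n_def field_simps)
  qed (use \<open>t * (1 + A) \<le> 1\<close> small y min in \<open>auto simp: A_def n_def p_def D_def\<close>)
  thus ?thesis
    using min \<open>0 < \<epsilon>\<close> by (intro exI[of _ \<epsilon>]) (force simp: A_def n_def D_def)
qed

lemma u_origin_pos: "0 < u 0"
proof (rule ccontr)
  assume "\<not> 0 < u 0"
  hence "u 0 = 0"
    using u_nonneg[of 0] by simp
  obtain \<epsilon> where "0 < \<epsilon>"
    and below: "\<And>y. 0 \<le> y \<bullet> e \<Longrightarrow> norm y \<le> 1 \<Longrightarrow> \<epsilon> * hopf_barrier e (real DIM('a) + 1) y \<le> u y"
    using hopf_barrier_below by blast
  have "0 \<le> - \<epsilon>"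
  proof (rule DERIV_right_local_min_nonneg[of "\<lambda>s. u (s *\<^sub>R e) - \<epsilon> * s" _ 1])
    show "((\<lambda>s. u (s *\<^sub>R e) - \<epsilon> * s) has_real_derivative - \<epsilon>) (at_right 0)"
      using DERIV_diff[OF bdry[of 0] DERIV_cmult_right[OF DERIV_ident, of \<epsilon>]] \<open>u 0 = 0\<close>
      by (simp add: mult.commute)
    show "u (0 *\<^sub>R e) - \<epsilon> * 0 \<le> u (s *\<^sub>R e) - \<epsilon> * s" if "0 < s" "s < 1" for s
    proof -
      have "\<epsilon> * s \<le> \<epsilon> * hopf_barrier e (real DIM('a) + 1) (s *\<^sub>R e)"
        using that \<open>0 < \<epsilon>\<close> by (simp add: hopf_barrier_axis[OF e])
      thus ?thesis
        using below[of "s *\<^sub>R e"] that e \<open>u 0 = 0\<close> by simp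
    qed
  qed simp
  thus False
    using \<open>0 < \<epsilon>\<close> by simp
qed

lemma u_ge_near_origin: "\<exists>\<rho>>0. \<forall>y. 0 \<le> y \<bullet> e \<longrightarrow> norm y \<le> \<rho> \<longrightarrow> u 0 / 2 \<le> u y"
proof -
  have "(0::'a) \<in> {x. 0 \<le> x \<bullet> e}" "0 < u 0 / 2"
    using u_origin_pos by auto
  then obtain d where "0 < d" and d: "\<forall>y\<in>{x. 0 \<le> x \<bullet> e}. dist y 0 < d \<longrightarrow> dist (u y) (u 0) < u 0 / 2"
    using cont unfolding continuous_on_iff by blast
  have "u 0 / 2 \<le> u y" if "0 \<le> y \<bullet> e" "norm y \<le> d / 2" for y
  proof -
    have "dist (u y) (u 0) < u 0 / 2"
      using d that \<open>0 < d\<close> by simp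
    thus ?thesis
      unfolding dist_real_def by arith
  qed
  thus ?thesis
    using \<open>0 < d\<close> by (intro exI[of _ "d / 2"]) auto
qed

lemma u_bounded_on_half_ball: "\<exists>M>0. \<forall>y. 0 \<le> y \<bullet> e \<longrightarrow> norm y \<le> 1 \<longrightarrow> u y \<le> M"
proof -
  define D where "D = cball (0::'a) 1 \<inter> {z. 0 \<le> z \<bullet> e}"
  have "compact D" "D \<subseteq> {z. 0 \<le> z \<bullet> e}"
    using compact_half_cball by (auto simp: D_def)
  hence "bounded (u ` D)"
    by (intro compact_imp_bounded compact_continuous_image continuous_on_subset[OF cont])
  then obtain M where M: "\<And>y. y \<in> D \<Longrightarrow> \<bar>u y\<bar> \<le> M"
    unfolding bounded_iff by auto
  have "u y \<le> max M 1" if "0 \<le> y \<bullet> e" "norm y \<le> 1" for y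
    using M[of y] that by (simp add: D_def)
  thus ?thesis
    by (intro exI[of _ "max M 1"]) auto
qed

lemma exterior_contact_off_boundary:
  fixes \<delta> m r0 :: real
  defines "n \<equiv> real DIM('a)"
  assumes "0 < r0" "m < 0"
    and below: "\<And>z. 0 \<le> z \<bullet> e \<Longrightarrow> r0 \<le> norm z \<Longrightarrow> \<delta> * decay_profile n z + m * norm (z + e) powr (-1/2) \<le> u z"
    and y: "0 \<le> y \<bullet> e" "r0 \<le> norm y" "u y = \<delta> * decay_profile n y + m * norm (y + e) powr (-1/2)"
  shows "0 < y \<bullet> e"
proof (rule ccontr)
  define \<psi> where "\<psi> z = \<delta> * decay_profile n z + m * norm (z + e) powr (-1/2)" for z
  assume "\<not> 0 < y \<bullet> e"
  hence "y \<bullet> e = 0"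
    using y(1) by simp
  have "y \<noteq> 0" "y \<noteq> - e"
    using y(2) \<open>0 < r0\<close> \<open>y \<bullet> e = 0\<close> e by auto
  have d1: "((\<lambda>s. norm (y + s *\<^sub>R e) powr b) has_real_derivative 0) (at 0)" for b
    using norm_powr_line_deriv[OF \<open>y \<noteq> 0\<close>, of e b] \<open>y \<bullet> e = 0\<close> by simp
  have d2: "((\<lambda>s. norm (y + s *\<^sub>R e + e) powr (-1/2)) has_real_derivative
              -1/2 * norm (y + e) powr (-5/2)) (at 0)"
    using norm_powr_line_deriv[OF \<open>y \<noteq> - e\<close>, of e "-1/2"] \<open>y \<bullet> e = 0\<close> e
    by (simp add: inner_add_left)
  have d\<psi>: "((\<lambda>s. \<psi> (y + s *\<^sub>R e)) has_real_derivative \<delta> * (0 + 0) + m * (-1/2 * norm (y + e) powr (-5/2))) (at 0)"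
    unfolding \<psi>_def decay_profile_def by (intro DERIV_add DERIV_cmult d1 d2)
  have "((\<lambda>s. u (y + s *\<^sub>R e) - \<psi> (y + s *\<^sub>R e)) has_real_derivative
           - c * u y powr (n / (n - 2)) + m / 2 * norm (y + e) powr (-5/2)) (at_right 0)"
    using DERIV_diff[OF bdry[OF \<open>y \<bullet> e = 0\<close>] has_field_derivative_at_within[OF d\<psi>]]
    by (rule DERIV_cong) (simp add: n_def)
  hence "0 \<le> - c * u y powr (n / (n - 2)) + m / 2 * norm (y + e) powr (-5/2)"
  proof (rule DERIV_right_local_min_nonneg[OF _ zero_less_one])
    fix s :: real
    assume "0 < s"
    have "(norm (y + s *\<^sub>R e))\<^sup>2 = (norm y)\<^sup>2 + s\<^sup>2"
      using norm_add_Pythagorean[of y "s *\<^sub>R e"] \<open>y \<bullet> e = 0\<close> e by (simp add: orthogonal_def)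
    hence "(norm y)\<^sup>2 \<le> (norm (y + s *\<^sub>R e))\<^sup>2"
      by simp
    hence "norm y \<le> norm (y + s *\<^sub>R e)"
      by (rule power2_le_imp_le) simp
    moreover have "0 \<le> (y + s *\<^sub>R e) \<bullet> e"
      using \<open>y \<bullet> e = 0\<close> \<open>0 < s\<close> e by (simp add: inner_add_left)
    ultimately show "u (y + 0 *\<^sub>R e) - \<psi> (y + 0 *\<^sub>R e) \<le> u (y + s *\<^sub>R e) - \<psi> (y + s *\<^sub>R e)"
      using below[of "y + s *\<^sub>R e"] y by (simp add: \<psi>_def)
  qed
  moreover have "0 \<le> c * u y powr (n / (n - 2))"
    using c by simp
  moreover have "m / 2 * norm (y + e) powr (-5/2) < 0"
    using \<open>m < 0\<close> \<open>y \<noteq> - e\<close> by (simp add: mult_neg_pos add_eq_0_iff2)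
  ultimately show False
    by linarith
qed

lemma exterior_contact_on_sphere:
  fixes \<delta> m r0 :: real
  defines "n \<equiv> real DIM('a)"
  assumes "0 < r0" "0 < \<delta>" "m < 0"
    and sub: "\<And>z::'a. r0 \<le> norm z \<Longrightarrow>
                n * (n - 2) * (\<delta> * decay_profile n z) powr ((n + 2) / (n - 2)) \<le> \<delta> * (n - 1) * norm z powr (-1 - n)"
    and below: "\<And>z. 0 \<le> z \<bullet> e \<Longrightarrow> r0 \<le> norm z \<Longrightarrow> \<delta> * decay_profile n z + m * norm (z + e) powr (-1/2) \<le> u z"
    and y: "0 < y \<bullet> e" "r0 \<le> norm y" "u y = \<delta> * decay_profile n y + m * norm (y + e) powr (-1/2)"
  shows "norm y = r0"
proof (rule ccontr)
  assume "norm y \<noteq> r0"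
  hence "r0 < norm y"
    using y(2) by simp
  have "3 \<le> n"
    using dim by (simp add: n_def)
  have "y \<noteq> 0" "y \<noteq> - e"
    using y(1) e by auto
  define r where "r = min (y \<bullet> e) (norm y - r0)"
  have "0 < r"
    using y(1) \<open>r0 < norm y\<close> by (simp add: r_def)
  have ball: "0 < z \<bullet> e" "r0 < norm z" if "z \<in> ball y r" for z
    using ball_min_inner_bounds[OF e that[unfolded r_def]] by auto
  have "r \<le> norm (y - 0)"
    using Basis_le_norm[OF e, of y] by (simp add: r_def)
  moreover have "r \<le> norm (y - - e)"
    using Basis_le_norm[OF e, of "y + e"] e by (simp add: r_def inner_add_left)
  ultimately have lsd: "line_second_derivs (\<lambda>z. \<delta> * (norm (z - 0) powr (2 - n) + norm (z - 0) powr (1 - n))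
        + m * norm (z - - e) powr (-1/2)) y r
      (\<lambda>i. \<delta> * (radial_second_deriv 0 (2 - n) y i + radial_second_deriv 0 (1 - n) y i)
        + m * radial_second_deriv (- e) (-1/2) y i)"
    using \<open>0 < r\<close> by (intro line_second_derivs_add line_second_derivs_cmult norm_powr_line_second_derivs)
  show False
  proof (rule no_interior_local_min[OF \<open>0 < r\<close> _ lsd[unfolded n_def]])
    show "ball y r \<subseteq> halfspace e"
      using ball by (auto simp: halfspace_def)
    show "u y - (\<delta> * (norm (y - 0) powr (2 - real DIM('a)) + norm (y - 0) powr (1 - real DIM('a)))
            + m * norm (y - - e) powr (-1/2))
          \<le> u z - (\<delta> * (norm (z - 0) powr (2 - real DIM('a)) + norm (z - 0) powr (1 - real DIM('a)))
            + m * norm (z - - e) powr (-1/2))" if "z \<in> ball y r" for z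
      using below[of z] ball[OF that] y(3) by (simp add: decay_profile_def n_def)
    show "u y \<le> \<delta> * decay_profile (real DIM('a)) y"
      using y(3) \<open>m < 0\<close> \<open>y \<noteq> - e\<close> by (simp add: n_def mult_nonpos_nonneg)
    show "real DIM('a) * (real DIM('a) - 2) * (\<delta> * decay_profile (real DIM('a)) y) powr ((real DIM('a) + 2) / (real DIM('a) - 2))
        < (\<Sum>i\<in>Basis. \<delta> * (radial_second_deriv 0 (2 - real DIM('a)) y i + radial_second_deriv 0 (1 - real DIM('a)) y i)
            + m * radial_second_deriv (- e) (-1/2) y i)"
      using sub[OF y(2)] exterior_barrier_second_derivs_gt[OF dim \<open>0 < \<delta>\<close> \<open>m < 0\<close> \<open>y \<noteq> 0\<close> \<open>y \<noteq> - e\<close>]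
      unfolding n_def by linarith
  qed
qed

lemma exterior_quotient_tail:
  fixes \<delta> t :: real
  defines "n \<equiv> real DIM('a)"
  assumes "0 < \<delta>" "0 < t" "0 \<le> z \<bullet> e" "1 \<le> norm z" "8 * \<delta> / t \<le> sqrt (norm z)"
  shows "- t / 2 \<le> (u z - \<delta> * decay_profile n z) / norm (z + e) powr (-1/2)"
proof -
  have "3 \<le> n"
    using dim by (simp add: n_def)
  have "z + e \<noteq> 0"
    using assms(4) e by (auto simp: add_eq_0_iff2)
  hence "0 < norm (z + e) powr (-1/2)"
    by simp
  have "0 < sqrt (norm z)"
    using assms(5) by auto
  hence "4 * \<delta> / sqrt (norm z) \<le> t / 2"
    using assms(2,3,6) by (simp add: field_simps)
  have "\<delta> * decay_profile n z \<le> \<delta> * (4 / sqrt (norm z) * norm (z + e) powr (-1/2))"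
    using decay_profile_le_at_infinity[OF \<open>3 \<le> n\<close> _ assms(5) \<open>z + e \<noteq> 0\<close>] e \<open>0 < \<delta>\<close>
    by (intro mult_left_mono) auto
  also have "\<dots> = 4 * \<delta> / sqrt (norm z) * norm (z + e) powr (-1/2)"
    by simp
  also have "\<dots> \<le> t / 2 * norm (z + e) powr (-1/2)"
    using \<open>4 * \<delta> / sqrt (norm z) \<le> t / 2\<close> \<open>0 < norm (z + e) powr (-1/2)\<close> by (intro mult_right_mono) auto
  finally show ?thesis
    using u_nonneg[OF assms(4)] \<open>0 < norm (z + e) powr (-1/2)\<close> by (simp add: field_simps)
qed

(* The weight |z + e|^(-1/2) decays more slowly than the profile, so (u - delta profile) / weight
   has a nonnegative limit at infinity and attains its negative infimum, which is m. *)
lemma exterior_touching_barrier: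
  fixes \<delta> r0 :: real
  defines "n \<equiv> real DIM('a)"
  assumes "0 < r0" "0 < \<delta>" and y: "0 \<le> y \<bullet> e" "r0 \<le> norm y" "u y < \<delta> * decay_profile n y"
  obtains y0 m where "m < 0" "0 \<le> y0 \<bullet> e" "r0 \<le> norm y0"
    "u y0 = \<delta> * decay_profile n y0 + m * norm (y0 + e) powr (-1/2)"
    "\<And>z. 0 \<le> z \<bullet> e \<Longrightarrow> r0 \<le> norm z \<Longrightarrow> \<delta> * decay_profile n z + m * norm (z + e) powr (-1/2) \<le> u z"
proof -
  define Q where "Q z = (u z - \<delta> * decay_profile n z) / norm (z + e) powr (-1/2)" for z
  have "z + e \<noteq> 0" if "0 \<le> z \<bullet> e" for z
    using that e by (auto simp: add_eq_0_iff2)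
  hence \<phi>_pos: "0 < norm (z + e) powr (-1/2)" if "0 \<le> z \<bullet> e" for z
    using that by simp
  define S where "S = {z. 0 \<le> z \<bullet> e} \<inter> - ball 0 r0"
  have "closed S"
    unfolding S_def by (intro closed_Int closed_Collect_le continuous_intros) auto
  have "continuous_on S Q"
    unfolding Q_def decay_profile_def
    using \<open>0 < r0\<close> \<open>\<And>z. 0 \<le> z \<bullet> e \<Longrightarrow> z + e \<noteq> 0\<close>
    by (intro continuous_intros continuous_on_subset[OF cont]) (auto simp: S_def)
  have "Q y < 0"
    using y \<phi>_pos[OF y(1)] by (simp add: Q_def divide_neg_pos)
  have tail: "Q y \<le> Q z" if "0 \<le> z \<bullet> e" "max 1 ((8 * \<delta> / - Q y)\<^sup>2) \<le> norm z" for z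
  proof -
    have "8 * \<delta> / - Q y \<le> sqrt (norm z)"
      using that by (intro real_le_rsqrt) simp
    hence "- (- Q y) / 2 \<le> (u z - \<delta> * decay_profile n z) / norm (z + e) powr (-1/2)"
      using \<open>0 < \<delta>\<close> \<open>Q y < 0\<close> that unfolding n_def by (intro exterior_quotient_tail) auto
    thus ?thesis
      using \<open>Q y < 0\<close> unfolding Q_def[of z] by linarith
  qed
  have "\<exists>y0\<in>S. \<forall>z\<in>S. Q y0 \<le> Q z"
  proof (rule continuous_attains_inf_coercive[OF \<open>closed S\<close> \<open>continuous_on S Q\<close>, of y "max 1 ((8 * \<delta> / - Q y)\<^sup>2)"])
    show "y \<in> S"
      using y by (simp add: S_def)
    show "Q y \<le> Q z" if "z \<in> S" "max 1 ((8 * \<delta> / - Q y)\<^sup>2) \<le> norm z" for z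
      using tail that by (simp add: S_def)
  qed
  then obtain y0 where "y0 \<in> S" and min: "\<And>z. z \<in> S \<Longrightarrow> Q y0 \<le> Q z"
    by blast
  show ?thesis
  proof (rule that[of "Q y0" y0])
    show "Q y0 < 0"
      using min[of y] y \<open>Q y < 0\<close> by (simp add: S_def)
    show "0 \<le> y0 \<bullet> e" "r0 \<le> norm y0"
      using \<open>y0 \<in> S\<close> by (auto simp: S_def)
    thus "u y0 = \<delta> * decay_profile n y0 + Q y0 * norm (y0 + e) powr (-1/2)"
      using \<phi>_pos by (simp add: Q_def)
    show "\<delta> * decay_profile n z + Q y0 * norm (z + e) powr (-1/2) \<le> u z"
      if "0 \<le> z \<bullet> e" "r0 \<le> norm z" for z
      using min[of z] that \<phi>_pos[OF that(1)] by (simp add: S_def Q_def pos_le_divide_eq algebra_simps)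
  qed
qed

lemma exterior_comparison:
  fixes \<delta> r0 :: real
  defines "n \<equiv> real DIM('a)"
  assumes "0 < r0" "0 < \<delta>"
    and sphere: "\<And>z. 0 \<le> z \<bullet> e \<Longrightarrow> norm z = r0 \<Longrightarrow> \<delta> * decay_profile n z \<le> u z"
    and sub: "\<And>z::'a. r0 \<le> norm z \<Longrightarrow>
                n * (n - 2) * (\<delta> * decay_profile n z) powr ((n + 2) / (n - 2)) \<le> \<delta> * (n - 1) * norm z powr (-1 - n)"
    and y: "0 \<le> y \<bullet> e" "r0 \<le> norm y"
  shows "\<delta> * decay_profile n y \<le> u y"
proof (rule ccontr)
  assume "\<not> ?thesis"
  hence "u y < \<delta> * decay_profile n y"
    by simp
  then obtain y0 m where "m < 0" "0 \<le> y0 \<bullet> e" "r0 \<le> norm y0"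
    and contact: "u y0 = \<delta> * decay_profile n y0 + m * norm (y0 + e) powr (-1/2)"
    and below: "\<And>z. 0 \<le> z \<bullet> e \<Longrightarrow> r0 \<le> norm z \<Longrightarrow> \<delta> * decay_profile n z + m * norm (z + e) powr (-1/2) \<le> u z"
    using exterior_touching_barrier[OF \<open>0 < r0\<close> \<open>0 < \<delta>\<close> y, folded n_def] by blast
  have "0 < y0 \<bullet> e"
    using exterior_contact_off_boundary[OF \<open>0 < r0\<close> \<open>m < 0\<close>] below \<open>0 \<le> y0 \<bullet> e\<close> \<open>r0 \<le> norm y0\<close> contact
    unfolding n_def by blast
  hence "norm y0 = r0"
    using exterior_contact_on_sphere[OF \<open>0 < r0\<close> \<open>0 < \<delta>\<close> \<open>m < 0\<close>] sub below \<open>r0 \<le> norm y0\<close> contact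
    unfolding n_def by blast
  moreover have "y0 \<noteq> - e"
    using \<open>0 < y0 \<bullet> e\<close> e by auto
  hence "m * norm (y0 + e) powr (-1/2) < 0"
    using \<open>m < 0\<close> by (simp add: mult_neg_pos add_eq_0_iff2)
  ultimately show False
    using sphere[OF \<open>0 \<le> y0 \<bullet> e\<close>] contact by simp
qed

lemma decay_lower_bound:
  assumes "0 < r0" "0 < m0" and sphere: "\<And>y. 0 \<le> y \<bullet> e \<Longrightarrow> norm y = r0 \<Longrightarrow> m0 \<le> u y"
  shows "\<exists>\<delta>>0. \<forall>y. 0 \<le> y \<bullet> e \<longrightarrow> r0 \<le> norm y \<longrightarrow> \<delta> * norm y powr (2 - real DIM('a)) \<le> u y"
proof -
  define n where "n = real DIM('a)"
  define p where "p = (n + 2) / (n - 2)"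
  define \<Phi>0 where "\<Phi>0 = r0 powr (2 - n) + r0 powr (1 - n)"
  define B where "B = (1 + 1 / r0) powr p"
  define L where "L = (n - 1) * r0 / (n * (n - 2))"
  have "3 \<le> n"
    using dim by (simp add: n_def)
  have "0 < 1 + 1 / r0"
    using assms(1) by (intro add_pos_pos) auto
  hence "0 < B"
    unfolding B_def powr_gt_zero by linarith
  have "0 < \<Phi>0"
    using assms(1) by (simp add: \<Phi>0_def add_pos_pos)
  have "0 < p - 1" "0 < L / B" "0 < m0 / \<Phi>0"
    using \<open>3 \<le> n\<close> assms(1,2) \<open>0 < \<Phi>0\<close> \<open>0 < B\<close> by (auto simp: p_def L_def field_simps)
  then obtain \<delta> where "0 < \<delta>" "\<delta> \<le> m0 / \<Phi>0" and "\<delta> powr (p - 1) \<le> L / B"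
    using exists_small_powr_le by blast
  hence small: "\<delta> powr (p - 1) * B \<le> L"
    using \<open>0 < B\<close> by (simp add: le_divide_eq)
  have "\<delta> * decay_profile n y \<le> u y" if "0 \<le> y \<bullet> e" "r0 \<le> norm y" for y
  proof (rule exterior_comparison[OF \<open>0 < r0\<close> \<open>0 < \<delta>\<close>, folded n_def])
    show "\<delta> * decay_profile n z \<le> u z" if "0 \<le> z \<bullet> e" "norm z = r0" for z
    proof -
      have "\<delta> * decay_profile n z = \<delta> * \<Phi>0"
        using that(2) by (simp add: decay_profile_def \<Phi>0_def)
      also have "\<dots> \<le> m0"
        using \<open>\<delta> \<le> m0 / \<Phi>0\<close> \<open>0 < \<Phi>0\<close> by (simp add: pos_le_divide_eq mult.commute)
      finally show ?thesis
        using sphere[OF that] by simp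
    qed
    show "n * (n - 2) * (\<delta> * decay_profile n z) powr ((n + 2) / (n - 2)) \<le> \<delta> * (n - 1) * norm z powr (-1 - n)"
      if "r0 \<le> norm z" for z :: 'a
    proof (rule decay_profile_subsolution[OF \<open>3 \<le> n\<close> \<open>0 < \<delta>\<close> \<open>0 < r0\<close> that])
      show "\<delta> powr ((n + 2) / (n - 2) - 1) * (1 + 1 / r0) powr ((n + 2) / (n - 2)) \<le> (n - 1) * r0 / (n * (n - 2))"
        using small by (simp add: p_def B_def L_def)
    qed
  qed (use that in auto)
  moreover have "norm y powr (2 - n) \<le> decay_profile n y" for y :: 'a
    by (simp add: decay_profile_def)
  ultimately show ?thesis
    using \<open>0 < \<delta>\<close> by (intro exI[of _ \<delta>]) (force simp: n_def intro: order.trans[OF mult_left_mono])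
qed

lemma ray_weighted_mono_far:
  assumes "0 < r0" "0 < m0" "\<And>y. 0 \<le> y \<bullet> e \<Longrightarrow> norm y = r0 \<Longrightarrow> m0 \<le> u y"
  shows "\<exists>\<eta>>0. \<forall>\<omega> r s. 0 < \<omega> \<bullet> e \<longrightarrow> norm \<omega> = 1 \<longrightarrow> 0 < s \<longrightarrow> s < r \<longrightarrow> r * s \<le> \<eta> \<longrightarrow> r0 \<le> r \<longrightarrow>
           s powr ((real DIM('a) - 2) / 2) * u (s *\<^sub>R \<omega>) \<le> r powr ((real DIM('a) - 2) / 2) * u (r *\<^sub>R \<omega>)"
proof -
  define \<alpha> where "\<alpha> = (real DIM('a) - 2) / 2"
  have "0 < \<alpha>"
    using dim by (simp add: \<alpha>_def)
  have "-2 * \<alpha> = 2 - real DIM('a)"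
    by (simp add: \<alpha>_def)
  then obtain \<delta> where "0 < \<delta>"
    and decay: "\<And>y. 0 \<le> y \<bullet> e \<Longrightarrow> r0 \<le> norm y \<Longrightarrow> \<delta> * norm y powr (-2 * \<alpha>) \<le> u y"
    using decay_lower_bound[OF assms] by auto
  obtain M where "0 < M" and bound: "\<And>y. 0 \<le> y \<bullet> e \<Longrightarrow> norm y \<le> 1 \<Longrightarrow> u y \<le> M"
    using u_bounded_on_half_ball by blast
  define \<eta> where "\<eta> = min 1 ((\<delta> / M) powr (1 / \<alpha>))"
  have "s powr \<alpha> * u (s *\<^sub>R \<omega>) \<le> r powr \<alpha> * u (r *\<^sub>R \<omega>)"
    if \<omega>: "0 < \<omega> \<bullet> e" "norm \<omega> = 1" and rs: "0 < s" "s < r" "r * s \<le> \<eta>" "r0 \<le> r" for \<omega> r s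
  proof (rule powr_weighted_le_of_decay[OF rs(1) _ bound])
    have "s * s < r * s" "\<eta> \<le> 1"
      using rs by (simp_all add: \<eta>_def)
    hence "s * s < 1"
      using rs(3) by linarith
    thus "0 \<le> s *\<^sub>R \<omega> \<bullet> e" "norm (s *\<^sub>R \<omega>) \<le> 1"
      using \<omega> rs(1) abs_square_less_1[of s] by (simp_all add: power2_eq_square)
    have "(r * s) powr \<alpha> \<le> ((\<delta> / M) powr (1 / \<alpha>)) powr \<alpha>"
      using rs \<open>0 < \<alpha>\<close> by (intro powr_mono2) (auto simp: \<eta>_def)
    thus "(r * s) powr \<alpha> * M \<le> \<delta>"
      using \<open>0 < \<alpha>\<close> \<open>0 < M\<close> \<open>0 < \<delta>\<close> by (simp add: powr_powr pos_le_divide_eq)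
    show "\<delta> * r powr (-2 * \<alpha>) \<le> u (r *\<^sub>R \<omega>)"
      using decay[of "r *\<^sub>R \<omega>"] \<omega> rs by simp
  qed (use rs in simp)
  moreover have "0 < \<eta>"
    using \<open>0 < \<delta>\<close> \<open>0 < M\<close> by (simp add: \<eta>_def)
  ultimately show ?thesis
    unfolding \<alpha>_def by blast
qed

lemma ray_weighted_mono:
  assumes "\<exists>K\<ge>0. \<forall>\<omega> r s. 0 < \<omega> \<bullet> e \<longrightarrow> norm \<omega> = 1 \<longrightarrow> 0 < s \<longrightarrow> s \<le> r \<longrightarrow> r \<le> 1 \<longrightarrow>
             \<bar>u (r *\<^sub>R \<omega>) - u (s *\<^sub>R \<omega>)\<bar> \<le> K * (r - s)"
  shows "\<exists>\<eta>>0. \<forall>\<omega> r s. 0 < \<omega> \<bullet> e \<longrightarrow> norm \<omega> = 1 \<longrightarrow> 0 < s \<longrightarrow> s < r \<longrightarrow> r * s \<le> \<eta> \<longrightarrow>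
           s powr ((real DIM('a) - 2) / 2) * u (s *\<^sub>R \<omega>) \<le> r powr ((real DIM('a) - 2) / 2) * u (r *\<^sub>R \<omega>)"
proof -
  obtain K where "0 \<le> K" and lip: "\<And>\<omega> r s. 0 < \<omega> \<bullet> e \<Longrightarrow> norm \<omega> = 1 \<Longrightarrow> 0 < s \<Longrightarrow> s \<le> r \<Longrightarrow> r \<le> 1 \<Longrightarrow>
      \<bar>u (r *\<^sub>R \<omega>) - u (s *\<^sub>R \<omega>)\<bar> \<le> K * (r - s)"
    using assms by blast
  define \<alpha> where "\<alpha> = (real DIM('a) - 2) / 2"
  define m where "m = u 0 / 2"
  have "0 < \<alpha>" "0 < m"
    using dim u_origin_pos by (auto simp: \<alpha>_def m_def)
  obtain \<rho> where "0 < \<rho>" and near: "\<And>y. 0 \<le> y \<bullet> e \<Longrightarrow> norm y \<le> \<rho> \<Longrightarrow> m \<le> u y"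
    using u_ge_near_origin by (auto simp: m_def)
  define r0 where "r0 = min (min \<rho> 1) (\<alpha> * m / (K + 1))"
  have "0 < r0" "r0 \<le> \<rho>" "r0 \<le> 1" "r0 \<le> \<alpha> * m / (K + 1)"
    using \<open>0 < \<rho>\<close> \<open>0 < \<alpha>\<close> \<open>0 < m\<close> \<open>0 \<le> K\<close> by (auto simp: r0_def)
  hence "r0 * K \<le> \<alpha> * m"
    using \<open>0 \<le> K\<close> by (simp add: le_divide_eq distrib_left)
  obtain \<eta> where "0 < \<eta>" and far: "\<And>\<omega> r s. 0 < \<omega> \<bullet> e \<Longrightarrow> norm \<omega> = 1 \<Longrightarrow> 0 < s \<Longrightarrow> s < r \<Longrightarrow> r * s \<le> \<eta> \<Longrightarrow>
      r0 \<le> r \<Longrightarrow> s powr \<alpha> * u (s *\<^sub>R \<omega>) \<le> r powr \<alpha> * u (r *\<^sub>R \<omega>)"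
    using ray_weighted_mono_far[OF \<open>0 < r0\<close> \<open>0 < m\<close>] near \<open>r0 \<le> \<rho>\<close> unfolding \<alpha>_def by auto
  have near_case: "s powr \<alpha> * u (s *\<^sub>R \<omega>) \<le> r powr \<alpha> * u (r *\<^sub>R \<omega>)"
    if \<omega>: "0 < \<omega> \<bullet> e" "norm \<omega> = 1" and rs: "0 < s" "s < r" "r < r0" for \<omega> r s
  proof (rule powr_weighted_le_of_lipschitz[OF rs(1,2) \<open>0 < \<alpha>\<close> \<open>0 \<le> K\<close>])
    have "r * K \<le> r0 * K"
      using rs \<open>0 \<le> K\<close> by (simp add: mult_right_mono)
    moreover have "\<alpha> * m \<le> \<alpha> * u (r *\<^sub>R \<omega>)"
      using near[of "r *\<^sub>R \<omega>"] \<omega> rs \<open>r0 \<le> \<rho>\<close> \<open>0 < \<alpha>\<close> by simp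
    ultimately show "r * K \<le> \<alpha> * u (r *\<^sub>R \<omega>)"
      using \<open>r0 * K \<le> \<alpha> * m\<close> by linarith
    show "u (s *\<^sub>R \<omega>) \<le> u (r *\<^sub>R \<omega>) + K * (r - s)"
      using lip[OF \<omega> rs(1), of r] rs \<open>r0 \<le> 1\<close> by (simp add: abs_le_iff)
  qed
  have "s powr \<alpha> * u (s *\<^sub>R \<omega>) \<le> r powr \<alpha> * u (r *\<^sub>R \<omega>)"
    if "0 < \<omega> \<bullet> e" "norm \<omega> = 1" "0 < s" "s < r" "r * s \<le> \<eta>" for \<omega> r s
  proof (cases "r0 \<le> r")
    case True
    thus ?thesis
      using far[OF that] by blast
  qed (use near_case[OF that(1-4)] in simp)
  thus ?thesis
    using \<open>0 < \<eta>\<close> unfolding \<alpha>_def by blast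
qed

end

theorem proposition3p2:
  fixes u :: "'a::euclidean_space \<Rightarrow> real" and e :: 'a and c :: real
  assumes dim: "DIM('a) \<ge> 3"
    and e: "e \<in> Basis"
    and c: "c > 0"
    and C2: "C2_on (halfspace e) u"
    and C1: "C1_upto (halfspace e) u"
    and pde: "\<forall>x\<in>halfspace e. laplacian u x
               = real DIM('a) * (real DIM('a) - 2) * u x powr ((real DIM('a) + 2) / (real DIM('a) - 2))"
    and pos: "\<forall>x\<in>halfspace e. u x > 0"
    and bdry: "\<forall>x. x \<bullet> e = 0 \<longrightarrow>
               ((\<lambda>s. u (x + s *\<^sub>R e)) has_real_derivative
                 (- c * u x powr (real DIM('a) / (real DIM('a) - 2)))) (at_right 0)"
  shows "\<exists>\<Lambda>>0. \<forall>l\<ge>\<Lambda>. \<forall>x. x \<in> halfspace e \<and> norm x < l \<and> x \<noteq> 0 \<longrightarrow>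
           (let n = real DIM('a);
                v = (\<lambda>y. norm y powr (2 - n) * u ((1 / norm y ^ 2) *\<^sub>R y))
            in v x - l powr (n - 2) / norm x powr (n - 2) * v ((l\<^sup>2 / norm x ^ 2) *\<^sub>R x)) \<ge> 0"
proof -
  have "continuous_on {x. 0 \<le> x \<bullet> e} u"
    using C1 e by (simp add: C1_upto_def closure_halfspace nonzero_Basis)
  then interpret yamabe_half_space u e c
    using dim e c C2 pde pos bdry by unfold_locales auto
  show ?thesis
    using kelvin_difference_eventually_nonneg[OF ray_weighted_mono[OF C1_upto_radial_lipschitz[OF e C1]]]
    by (simp only: Let_def)
qed

end
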